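(* Let $q \ge 2$ and $n$ be integers, and let $k$ be an odd positive integer with $k \le \lfloor n/2\rfloor - 2$. For $i \in [1, \lfloor n/2\rfloor]$ define $$\alpha_{i,0} = -\frac{n(q-1)}{i}\sum_{j=0}^{i-1}(1-q)^j\binom{n-2i+j}{n-2i}\binom{2i-2-j}{i-1}.$$ If $(k+1)(2q-1) - (q-1)n \ge 0$ and $$\big((k+1)(2q-1) - (q-1)n\big)\,\alpha_{k+1,0} < \alpha_{k+2,0},$$ then $k$-uniform states in $(\mathbb{C}^q)^{\otimes n}$ do not exist.
   Context: For integers $a \le b$, $[a,b]$ denotes $\{a,a+1,\dots,b\}$. A pure state $|\psi\rangle \in (\mathbb{C}^q)^{\otimes n}$ is called $k$-uniform if, with $\rho = |\psi\rangle\langle\psi|$, for every subset $S \subseteq \{1,\dots,n\}$ with $|S| = k$ the reduced state of $\rho$ on the parties in $S$ equals $I/q^k$, where $I$ is the identity on $(\mathbb{C}^q)^{\otimes k}$. *)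

theory Defs
  imports Complex_Main
begin

text \<open>Computational basis of (C^q)^{\<otimes> n}: words of length n over {0..<q}.
  Party i (0-based, i < n) is the i-th letter.\<close>
definition basis :: "nat \<Rightarrow> nat \<Rightarrow> nat list set" where
  "basis q n = {xs. length xs = n \<and> set xs \<subseteq> {..<q}}"

text \<open>Entry of the reduced density matrix of |psi><psi| on the parties in S,
  at row index a|_S and column index b|_S (a, b full basis words; only their
  S-components matter): partial trace over the complement of S.\<close>
definition reduced :: "nat \<Rightarrow> nat \<Rightarrow> (nat list \<Rightarrow> complex) \<Rightarrow> nat set \<Rightarrow> nat list \<Rightarrow> nat list \<Rightarrow> complex" where
  "reduced q n psi S a b =
     (\<Sum>x\<in>basis q n. \<Sum>y\<in>basis q n.
        if (\<forall>i<n. i \<in> S \<longrightarrow> x ! i = a ! i \<and> y ! i = b ! i) \<and>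
           (\<forall>i<n. i \<notin> S \<longrightarrow> x ! i = y ! i)
        then psi x * cnj (psi y) else 0)"

text \<open>psi is a pure state (unit vector, given by its coefficients on the basis)
  whose k-party marginals are all maximally mixed.\<close>
definition k_uniform :: "nat \<Rightarrow> nat \<Rightarrow> nat \<Rightarrow> (nat list \<Rightarrow> complex) \<Rightarrow> bool" where
  "k_uniform q n k psi \<longleftrightarrow>
     (\<Sum>x\<in>basis q n. (cmod (psi x))\<^sup>2) = 1 \<and>
     (\<forall>S. S \<subseteq> {..<n} \<and> card S = k \<longrightarrow>
        (\<forall>a\<in>basis q n. \<forall>b\<in>basis q n.
           reduced q n psi S a b =
             (if (\<forall>i\<in>S. a ! i = b ! i) then 1 / of_nat (q ^ k) else 0)))"

definition alpha0 :: "nat \<Rightarrow> nat \<Rightarrow> nat \<Rightarrow> real" where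
  "alpha0 q n i = - (real n * (real q - 1) / real i) *
     (\<Sum>j<i. (1 - real q) ^ j * real ((n - 2*i + j) choose (n - 2*i))
                               * real ((2*i - 2 - j) choose (i - 1)))"

end

theory Submission
  imports Defs "HOL-Library.FuncSet" "HOL-Computational_Algebra.Polynomial_FPS"
begin

text \<open>For a pure state \<open>\<rho>\<close> let \<open>A\<^sub>j = \<Sum>\<^bsub>|U| = j\<^esub> tr \<rho>\<^sub>U\<^sup>2\<close> (\<open>unitary_enum\<close>) and let \<open>S\<^sub>t\<close> be the
  shadow enumerator. Purity gives \<open>A\<^sub>j = A\<^sub>n\<^sub>-\<^sub>j\<close>, \<open>k\<close>-uniformity gives \<open>A\<^sub>j = C(n,j) q\<^sup>-\<^sup>j\<close> for
  \<open>j \<le> k\<close>, Rains' shadow inequalities give \<open>S\<^sub>t \<ge> 0\<close>, and the Shor-Laflamme enumerator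
  \<open>A'\<^sub>w\<close>, the coefficient of \<open>X\<^sup>w\<close> in \<open>\<Sum>\<^sub>j A\<^sub>j q\<^sup>j X\<^sup>j (1 - X)\<^sup>n\<^sup>-\<^sup>j\<close>, is nonnegative.

  Symmetry and \<open>S\<^sub>t \<ge> 0\<close> allow writing that polynomial as
  \<open>\<Sum>\<^sub>i c\<^sub>i (X (1 - X))\<^sup>i (1 + (q - 1) X)\<^sup>n\<^sup>-\<^sup>2\<^sup>i\<close> with \<open>(-1)\<^sup>i c\<^sub>i \<ge> 0\<close>. The same basis expands
  \<open>1\<close> modulo \<open>X\<^sup>k\<^sup>+\<^sup>3\<close> with the coefficients \<open>\<alpha>\<^sub>i\<^sub>,\<^sub>0\<close> (Lagrange inversion). As \<open>A'\<^sub>0 = 1\<close>, \<open>A'\<^sub>w = 0\<close> for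
  \<open>0 < w \<le> k\<close> and the basis is unitriangular, \<open>c\<^sub>i = \<alpha>\<^sub>i\<^sub>,\<^sub>0\<close> for \<open>i \<le> k\<close>, and then
  \<open>A'\<^sub>k\<^sub>+\<^sub>2 = (c\<^sub>k\<^sub>+\<^sub>2 - \<alpha>\<^sub>k\<^sub>+\<^sub>2\<^sub>,\<^sub>0) - \<kappa> (c\<^sub>k\<^sub>+\<^sub>1 - \<alpha>\<^sub>k\<^sub>+\<^sub>1\<^sub>,\<^sub>0)\<close> with
  \<open>\<kappa> = (k + 1)(2q - 1) - (q - 1) n\<close>. Since \<open>k\<close> is odd, \<open>c\<^sub>k\<^sub>+\<^sub>1 \<ge> 0 \<ge> c\<^sub>k\<^sub>+\<^sub>2\<close>, so the
  hypotheses force \<open>A'\<^sub>k\<^sub>+\<^sub>2 < 0\<close>.\<close>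

unbundle fps_syntax

section \<open>Lagrange inversion\<close>

lemma fps_mult_one_plus_linear_nth:
  fixes f :: "'a::comm_ring_1 fps"
  shows "(f * (1 + fps_const c * fps_X)) $ Suc i = f $ Suc i + c * f $ i"
proof -
  have "f * (1 + fps_const c * fps_X) = f + fps_const c * (f * fps_X)"
    by (simp add: algebra_simps)
  then show ?thesis
    by simp
qed

lemma fps_inverse_linear_power_nth:
  fixes c :: "'a::field"
  shows "(inverse (1 + fps_const c * fps_X) ^ Suc r) $ j = of_nat ((r + j) choose j) * (- c) ^ j"
proof -
  define F where "F r = Abs_fps (\<lambda>j. of_nat ((r + j) choose j) * (- c) ^ j)" for r
  have F_mult: "F r * (1 + fps_const c * fps_X) ^ Suc r = 1" for r
  proof (induction r)
    case 0
    show ?case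
    proof (rule fps_ext)
      fix j
      show "(F 0 * (1 + fps_const c * fps_X) ^ Suc 0) $ j = 1 $ j"
        by (cases j) (simp_all only: power_Suc0_right fps_mult_one_plus_linear_nth, simp_all add: F_def)
    qed
  next
    case (Suc r)
    have "F (Suc r) * (1 + fps_const c * fps_X) = F r"
    proof (rule fps_ext)
      fix j
      show "(F (Suc r) * (1 + fps_const c * fps_X)) $ j = F r $ j"
      proof (cases j)
        case (Suc i)
        have pascal: "of_nat ((Suc r + Suc i) choose Suc i)
            = (of_nat ((r + Suc i) choose Suc i) + of_nat ((Suc r + i) choose i) :: 'a)"
          by simp
        have "(F (Suc r) * (1 + fps_const c * fps_X)) $ j
            = of_nat ((Suc r + Suc i) choose Suc i) * (- c) ^ Suc i
              - of_nat ((Suc r + i) choose i) * (- c) ^ Suc i"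
          using Suc by (simp add: fps_mult_one_plus_linear_nth F_def)
        also have "\<dots> = F r $ j"
          using Suc by (simp only: pascal F_def fps_nth_Abs_fps) (simp add: ring_distribs)
        finally show ?thesis .
      qed (simp add: F_def)
    qed
    then show ?case
      using Suc.IH by (simp only: power_Suc mult.assoc[symmetric])
  qed
  have "inverse ((1 + fps_const c * fps_X) ^ Suc r) = F r"
    using F_mult by (intro fps_inverse_unique) (simp add: mult.commute)
  then show ?thesis
    by (simp only: fps_inverse_power[symmetric]) (simp add: F_def)
qed

lemma fps_deriv_of_mult_eq_1:
  fixes v w :: "'a::comm_ring_1 fps"
  assumes vw: "v * w = 1"
  shows "fps_deriv v = - (v * v * fps_deriv w)"
proof -
  have "v * fps_deriv w + fps_deriv v * w = 0"
    using arg_cong[OF vw, of fps_deriv] by (simp only: fps_deriv_mult fps_deriv_1)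
  then have "fps_deriv v * w = - (v * fps_deriv w)"
    by (metis add.commute eq_neg_iff_add_eq_0)
  have "fps_deriv v = v * (fps_deriv v * w)"
    by (metis mult.left_commute mult_1_right vw)
  also have "\<dots> = - (v * v * fps_deriv w)"
    by (simp add: \<open>fps_deriv v * w = - (v * fps_deriv w)\<close> mult.assoc)
  finally show ?thesis .
qed

lemma fps_power_pred_mult_deriv_nth:
  fixes w :: "'a::field_char_0 fps"
  assumes "1 \<le> s"
  shows "(w ^ (s - 1) * fps_deriv w) $ (s - 1) = (w ^ s) $ s"
proof -
  have "fps_deriv (w ^ s) = fps_const (of_nat s) * (w ^ (s - 1) * fps_deriv w)"
    by (simp add: fps_deriv_power' fps_of_nat algebra_simps)
  then have "of_nat s * (w ^ (s - 1) * fps_deriv w) $ (s - 1) = (fps_deriv (w ^ s)) $ (s - 1)"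
    by simp
  then show ?thesis
    using assms by simp
qed

lemma fps_deriv_power_mult_inverse_power:
  fixes v w :: "'a::comm_ring_1 fps"
  assumes vw: "v * w = 1" and i: "1 \<le> i"
  shows "fps_deriv (v ^ i) * w ^ (i + Suc s) = - (fps_const (of_nat i) * (w ^ s * fps_deriv w))"
proof -
  have "w ^ (i + Suc s) = w ^ (i - 1) * w * w * w ^ s"
    using i by (simp flip: power_add power_Suc power_Suc2)
  then have "fps_deriv (v ^ i) * w ^ (i + Suc s)
      = - (fps_const (of_nat i) * ((v * w) ^ (i - 1) * (v * w) * (v * w)) * (w ^ s * fps_deriv w))"
    unfolding fps_deriv_power fps_deriv_of_mult_eq_1[OF vw] power_mult_distrib
    by (simp only: mult_ac minus_mult_left minus_mult_right)
  then show ?thesis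
    using vw by simp
qed

lemma lagrange_residue_nth:
  fixes v w :: "'a::field_char_0 fps"
  assumes vw: "v * w = 1" and m: "1 \<le> m"
  shows "(fps_deriv ((fps_X * v) ^ i) * w ^ m) $ (m - 1) = (if i = m then of_nat m else 0)"
proof -
  have deriv: "fps_deriv ((fps_X * v) ^ i)
      = fps_const (of_nat i) * fps_X ^ (i - 1) * v ^ i + fps_X ^ i * fps_deriv (v ^ i)"
    by (simp add: power_mult_distrib fps_deriv_power' fps_of_nat)
  consider "i = 0" | "m < i" | s where "1 \<le> i" "m = i + s"
    by (metis le_add_diff_inverse less_one not_le)
  then show ?thesis
  proof cases
    case 1
    then show ?thesis
      using m by simp
  next
    case 2
    have "fps_deriv ((fps_X * v) ^ i) $ j = 0" if "j \<le> m - 1" for j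
      using 2 m that by (simp only: fps_deriv_nth) (simp add: power_mult_distrib fps_X_power_mult_nth)
    then show ?thesis
      using 2 by (auto simp: fps_mult_nth intro!: sum.neutral)
  next
    case (3 s)
    have "v ^ i * w ^ m = (v * w) ^ i * w ^ s"
      using 3 by (simp add: power_add power_mult_distrib mult_ac)
    then have "fps_const (of_nat i) * fps_X ^ (i - 1) * v ^ i * w ^ m
        = fps_const (of_nat i) * (fps_X ^ (i - 1) * w ^ s)"
      using vw by (simp add: mult.assoc)
    moreover have "m - 1 - (i - 1) = s" "\<not> m - 1 < i - 1"
      using 3 by auto
    ultimately have first: "(fps_const (of_nat i) * fps_X ^ (i - 1) * v ^ i * w ^ m) $ (m - 1)
        = of_nat i * (w ^ s) $ s"
      by (simp only: fps_mult_left_const_nth fps_X_power_mult_nth if_False)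
    have split: "(fps_deriv ((fps_X * v) ^ i) * w ^ m) $ (m - 1)
        = of_nat i * (w ^ s) $ s + (fps_X ^ i * (fps_deriv (v ^ i) * w ^ m)) $ (m - 1)"
      unfolding deriv distrib_right fps_add_nth first[symmetric] by (simp add: mult.assoc)
    show ?thesis
    proof (cases s)
      case 0
      then show ?thesis
        using split m 3 by (simp add: fps_X_power_mult_nth)
    next
      case (Suc s')
      have "fps_deriv (v ^ i) * w ^ m = - (fps_const (of_nat i) * (w ^ s' * fps_deriv w))"
        using fps_deriv_power_mult_inverse_power[OF vw 3(1)] 3 Suc by simp
      moreover have "m - 1 - i = s'" "\<not> m - 1 < i"
        using 3 Suc by auto
      ultimately show ?thesis
        using split 3 Suc fps_power_pred_mult_deriv_nth[of "Suc s'" w] by (simp add: fps_X_power_mult_nth)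
    qed
  qed
qed

lemma fps_mult_nth_cong_prefix:
  assumes "\<And>i. i \<le> N \<Longrightarrow> f $ i = g $ i" and "j \<le> N"
  shows "(h * f) $ j = (h * g) $ j"
  using assms by (simp add: fps_mult_nth)

lemma fps_mult_nth_vanishing_prefix:
  fixes f g :: "'a::semiring_0 fps"
  assumes "\<And>i. i < l \<Longrightarrow> f $ i = 0"
  shows "(f * g) $ l = f $ l * g $ 0"
proof -
  have "(f * g) $ l = f $ l * g $ (l - l) + (\<Sum>i = 0..<l. f $ i * g $ (l - i))"
    by (simp add: fps_mult_nth sum.last_plus)
  also have "(\<Sum>i = 0..<l. f $ i * g $ (l - i)) = 0"
    using assms by (intro sum.neutral) auto
  finally show ?thesis
    by simp
qed

lemma lagrange_inversion_nth:
  fixes v w H :: "'a::field_char_0 fps" and c :: "nat \<Rightarrow> 'a"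
  assumes vw: "v * w = 1"
    and c0: "c 0 = H $ 0"
    and c: "\<And>m. 1 \<le> m \<Longrightarrow> m \<le> N \<Longrightarrow> of_nat m * c m = (fps_deriv H * w ^ m) $ (m - 1)"
    and mN: "m \<le> N"
  shows "(\<Sum>i\<le>N. fps_const (c i) * (fps_X * v) ^ i) $ m = H $ m"
proof -
  define E where "E = H - (\<Sum>i\<le>N. fps_const (c i) * (fps_X * v) ^ i)"
  have w0: "w $ 0 \<noteq> 0"
    using arg_cong[OF vw, of "\<lambda>f. f $ 0"] by auto
  have "E $ m = 0"
    using mN
  proof (induction m rule: less_induct)
    case (less m)
    show ?case
    proof (cases "m = 0")
      case True
      have "(\<Sum>i\<le>N. fps_const (c i) * (fps_X * v) ^ i) $ 0 = c 0"
        by (simp add: fps_sum_nth fps_power_zeroth zero_power if_distrib cong: if_cong)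
      then show ?thesis
        using True c0 by (simp add: E_def)
    next
      case False
      then obtain l where l: "m = Suc l"
        using not0_implies_Suc by blast
      have "(fps_deriv E * w ^ m) $ l = of_nat m * E $ m * (w $ 0) ^ m"
        using less l by (subst fps_mult_nth_vanishing_prefix) (auto simp: fps_power_zeroth)
      moreover have "(fps_deriv E * w ^ m) $ l = 0"
      proof -
        have "fps_deriv E * w ^ m = fps_deriv H * w ^ m
            - (\<Sum>i\<le>N. fps_const (c i) * (fps_deriv ((fps_X * v) ^ i) * w ^ m))"
          by (simp add: E_def fps_deriv_sum left_diff_distrib sum_distrib_right mult.assoc)
        then have "(fps_deriv E * w ^ m) $ l
            = of_nat m * c m - (\<Sum>i\<le>N. c i * (if i = m then of_nat m else 0))"
          using c[of m] lagrange_residue_nth[OF vw, of m] l less.prems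
          by (simp add: fps_sum_nth)
        also have "\<dots> = 0"
          using less.prems by (simp add: if_distrib cong: if_cong)
        finally show ?thesis .
      qed
      ultimately show ?thesis
        using w0 False by simp
    qed
  qed
  then show ?thesis
    by (simp add: E_def)
qed

text \<open>By Lagrange inversion with \<open>v = (1 - X) / (1 + a X)\<^sup>2\<close>, these are the coefficients
  expanding \<open>1\<close> in the basis \<open>lagrange_basis n a\<close> modulo \<open>X\<^sup>N\<^sup>+\<^sup>1\<close>, \<open>2N \<le> n\<close>; for
  \<open>a = q - 1\<close> and \<open>i > 0\<close> they are the \<open>\<alpha>\<^sub>i\<^sub>,\<^sub>0\<close> of the statement.\<close>
definition lagrange_coeff :: "nat \<Rightarrow> 'a::field_char_0 \<Rightarrow> nat \<Rightarrow> 'a" where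
  "lagrange_coeff n a i =
     (if i = 0 then 1
      else - (of_nat n * a / of_nat i) *
        (\<Sum>l<i. (- a) ^ l * of_nat ((n - 2*i + l) choose (n - 2*i)) * of_nat ((2*i - 2 - l) choose (i - 1))))"

definition lagrange_basis :: "nat \<Rightarrow> 'a::comm_ring_1 \<Rightarrow> nat \<Rightarrow> 'a fps" where
  "lagrange_basis n a i = (fps_X * (1 - fps_X)) ^ i * (1 + fps_const a * fps_X) ^ (n - 2*i)"

lemma alpha0_eq_lagrange_coeff: "0 < i \<Longrightarrow> alpha0 q n i = lagrange_coeff n (real q - 1) i"
  by (simp add: alpha0_def lagrange_coeff_def)

lemma lagrange_coeff_eq_convolution:
  fixes a :: "'a::field_char_0"
  assumes m: "1 \<le> m"
  shows "of_nat m * lagrange_coeff n a m = - (of_nat n * a) * (\<Sum>j = 0..m - 1.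
    of_nat ((n - 2*m + j) choose j) * (- a) ^ j * of_nat ((m - 1 + (m - 1 - j)) choose (m - 1 - j)))"
proof -
  have "{0..m - 1} = {..<m}"
    using m by auto
  moreover have "(n - 2*m + j) choose j = (n - 2*m + j) choose (n - 2*m)"
    and "(m - 1 + (m - 1 - j)) choose (m - 1 - j) = (2*m - 2 - j) choose (m - 1)"
    if "j < m" for j
    using that binomial_symmetric[of j "n - 2*m + j"] binomial_symmetric[of "m - 1 - j" "2*m - 2 - j"]
    by (simp_all add: Suc_diff_Suc numeral_2_eq_2)
  ultimately show ?thesis
    using m by (simp add: lagrange_coeff_def mult_ac)
qed

lemma fps_deriv_inverse_linear_power_mult:
  fixes a :: "'a::field"
  defines "G \<equiv> 1 + fps_const a * fps_X"
  assumes m: "1 \<le> m" and mn: "2*m \<le> n"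
  shows "fps_deriv (inverse G ^ n) * (G\<^sup>2 * inverse (1 - fps_X)) ^ m
    = fps_const (- (of_nat n * a)) * (inverse G ^ Suc (n - 2*m) * inverse (1 - fps_X) ^ m)"
proof -
  define Gi where "Gi = inverse G"
  have G0: "G $ 0 = 1"
    by (simp add: G_def)
  have GGi: "G * Gi = 1"
    unfolding Gi_def by (rule inverse_mult_eq_1') (simp add: G0)
  have "fps_deriv (Gi ^ n) = fps_const (- (of_nat n * a)) * Gi ^ Suc n"
  proof -
    have "fps_deriv Gi = - fps_const a * Gi\<^sup>2"
      unfolding Gi_def using G0 by (simp add: fps_inverse_deriv G_def)
    moreover have "Gi\<^sup>2 * Gi ^ (n - 1) = Gi ^ Suc n"
      using m mn by (simp flip: power_add)
    ultimately show ?thesis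
      by (simp add: fps_deriv_power fps_const_mult[symmetric] mult_ac del: fps_const_mult)
  qed
  moreover have "Gi ^ Suc n * (G\<^sup>2) ^ m = Gi ^ Suc (n - 2*m)"
  proof -
    have "Gi ^ Suc n = Gi ^ Suc (n - 2*m) * Gi ^ (2*m)"
      using mn by (simp flip: power_add)
    then have "Gi ^ Suc n * (G\<^sup>2) ^ m = Gi ^ Suc (n - 2*m) * (Gi ^ (2*m) * (G\<^sup>2) ^ m)"
      by (simp only: mult.assoc)
    moreover have "Gi ^ (2*m) * (G\<^sup>2) ^ m = 1"
      using GGi by (simp add: power_mult[symmetric] mult.commute flip: power_mult_distrib)
    ultimately show ?thesis
      by simp
  qed
  ultimately show ?thesis
    unfolding Gi_def[symmetric] power_mult_distrib by (simp add: mult_ac) (metis mult.assoc)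
qed

lemma lagrange_coeff_residue:
  fixes a :: "'a::field_char_0"
  defines "G \<equiv> 1 + fps_const a * fps_X"
  assumes m: "1 \<le> m" and mn: "2*m \<le> n"
  shows "of_nat m * lagrange_coeff n a m
    = (fps_deriv (inverse G ^ n) * (G\<^sup>2 * inverse (1 - fps_X)) ^ m) $ (m - 1)"
proof -
  have J: "inverse (1 - fps_X) = inverse (1 + fps_const (- 1) * fps_X :: 'a fps)"
    by (simp add: fps_const_neg[symmetric] del: fps_const_neg)
  have "(fps_deriv (inverse G ^ n) * (G\<^sup>2 * inverse (1 - fps_X)) ^ m) $ (m - 1)
      = - (of_nat n * a) * (inverse G ^ Suc (n - 2*m) * inverse (1 - fps_X) ^ Suc (m - 1)) $ (m - 1)"
    using fps_deriv_inverse_linear_power_mult[OF m mn, of a] m by (simp add: G_def)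
  also have "(inverse G ^ Suc (n - 2*m) * inverse (1 - fps_X) ^ Suc (m - 1)) $ (m - 1)
      = (\<Sum>j = 0..m - 1. of_nat ((n - 2*m + j) choose j) * (- a) ^ j
          * of_nat ((m - 1 + (m - 1 - j)) choose (m - 1 - j)))"
    unfolding fps_mult_nth G_def J fps_inverse_linear_power_nth by simp
  also have "- (of_nat n * a) * \<dots> = of_nat m * lagrange_coeff n a m"
    by (rule lagrange_coeff_eq_convolution[OF m, symmetric])
  finally show ?thesis ..
qed

lemma lagrange_basis_expansion_one:
  fixes a :: "'a::field_char_0"
  assumes N: "2*N \<le> n" and j: "j \<le> N"
  shows "(\<Sum>i\<le>N. fps_const (lagrange_coeff n a i) * lagrange_basis n a i) $ j = (if j = 0 then 1 else 0)"
proof -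
  define G where "G = 1 + fps_const a * fps_X"
  define Gi where "Gi = inverse G"
  define v where "v = (1 - fps_X) * Gi\<^sup>2"
  define w where "w = G\<^sup>2 * inverse (1 - fps_X :: 'a fps)"
  have GGi: "G * Gi = 1"
    unfolding Gi_def by (rule inverse_mult_eq_1') (simp add: G_def)
  have "(1 - fps_X) * inverse (1 - fps_X :: 'a fps) = 1"
    by (rule inverse_mult_eq_1') simp
  then have vw: "v * w = 1"
    using GGi by (simp add: v_def w_def power2_eq_square mult_ac)
  have basis: "lagrange_basis n a i = G ^ n * (fps_X * v) ^ i" if "i \<le> N" for i
  proof -
    have "G ^ n = G ^ (n - 2*i) * G ^ (2*i)"
      using that N by (simp flip: power_add)
    then have "G ^ n * (fps_X * v) ^ i = (fps_X * (1 - fps_X)) ^ i * G ^ (n - 2*i) * (G * Gi) ^ (2*i)"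
      unfolding v_def power_mult_distrib power_mult[symmetric] by (simp only: mult_ac)
    then show ?thesis
      using GGi by (simp add: lagrange_basis_def G_def)
  qed
  have "(\<Sum>i\<le>N. fps_const (lagrange_coeff n a i) * (fps_X * v) ^ i) $ m = (Gi ^ n) $ m"
    if "m \<le> N" for m
  proof (rule lagrange_inversion_nth[OF vw _ _ that])
    show "lagrange_coeff n a 0 = (Gi ^ n) $ 0"
      by (simp add: lagrange_coeff_def Gi_def G_def fps_power_zeroth)
    show "of_nat m * lagrange_coeff n a m = (fps_deriv (Gi ^ n) * w ^ m) $ (m - 1)"
      if "1 \<le> m" "m \<le> N" for m
      using lagrange_coeff_residue[of m n a] that N by (simp add: Gi_def G_def w_def)
  qed
  then have "(G ^ n * (\<Sum>i\<le>N. fps_const (lagrange_coeff n a i) * (fps_X * v) ^ i)) $ j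
      = (G ^ n * Gi ^ n) $ j"
    using j by (intro fps_mult_nth_cong_prefix)
  moreover have "G ^ n * Gi ^ n = 1"
    using GGi by (simp flip: power_mult_distrib)
  ultimately show ?thesis
    by (simp add: basis sum_distrib_left mult.left_commute)
qed

section \<open>Enumerator polynomials\<close>

lemma even_of_symmetric_enum:
  fixes a sg :: "nat \<Rightarrow> real"
  assumes sym: "\<And>j. j \<le> n \<Longrightarrow> a j = a (n - j)"
    and gen: "\<And>y. (\<Sum>j\<le>n. a j * (1 - y) ^ j * (1 + y) ^ (n - j)) = (\<Sum>t\<le>n. sg t * y ^ t)"
  shows "(\<Sum>j\<le>n. a j * (1 - y) ^ j * (1 + y) ^ (n - j)) = (\<Sum>m\<le>n div 2. sg (2*m) * (y\<^sup>2) ^ m)"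
proof -
  define P where "P y = (\<Sum>j\<le>n. a j * (1 - y) ^ j * (1 + y) ^ (n - j))" for y
  have "P (- y) = (\<Sum>j\<le>n. a j * (1 + y) ^ j * (1 - y) ^ (n - j))"
    by (simp add: P_def)
  also have "\<dots> = (\<Sum>j\<le>n. a (n - j) * (1 + y) ^ (n - j) * (1 - y) ^ (n - (n - j)))"
    by (rule sum.reindex_bij_witness[of _ "\<lambda>j. n - j" "\<lambda>j. n - j"]) auto
  also have "\<dots> = P y"
    unfolding P_def by (intro sum.cong refl) (simp add: sym[symmetric] mult_ac)
  finally have "P y = (P y + P (- y)) / 2"
    by simp
  also have "\<dots> = (\<Sum>t\<le>n. if even t then sg t * y ^ t else 0)"
    unfolding P_def gen sum.distrib[symmetric] sum_divide_distrib
    by (intro sum.cong refl) (auto simp: power_minus_odd)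
  also have "\<dots> = (\<Sum>t\<in>{..n} \<inter> {t. even t}. sg t * y ^ t)"
    by (simp add: sum.inter_restrict)
  also have "{..n} \<inter> {t. even t} = (\<lambda>m. 2*m) ` {..n div 2}"
    by (auto elim!: evenE)
  also have "(\<Sum>t\<in>(\<lambda>m. 2*m) ` {..n div 2}. sg t * y ^ t) = (\<Sum>m\<le>n div 2. sg (2*m) * (y\<^sup>2) ^ m)"
    by (subst sum.reindex) (auto simp: inj_on_def power_mult)
  finally show ?thesis
    by (simp add: P_def)
qed

lemma sum_powers_shift_one:
  fixes s :: "nat \<Rightarrow> 'a::comm_ring_1"
  shows "(\<Sum>m\<le>h. s m * z ^ m) = (\<Sum>i\<le>h. (\<Sum>m\<le>h. of_nat (m choose i) * s m) * (z - 1) ^ i)"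
proof -
  have "z ^ m = (\<Sum>i\<le>h. of_nat (m choose i) * (z - 1) ^ i)" if "m \<le> h" for m
  proof -
    have "z ^ m = (\<Sum>i\<le>m. of_nat (m choose i) * (z - 1) ^ i)"
      using binomial_ring[of "z - 1" 1 m] by simp
    also have "\<dots> = (\<Sum>i\<le>h. of_nat (m choose i) * (z - 1) ^ i)"
      using that by (intro sum.mono_neutral_left) (auto simp: binomial_eq_0)
    finally show ?thesis .
  qed
  then have "(\<Sum>m\<le>h. s m * z ^ m) = (\<Sum>m\<le>h. \<Sum>i\<le>h. of_nat (m choose i) * s m * (z - 1) ^ i)"
    by (simp add: sum_distrib_left mult_ac)
  also have "\<dots> = (\<Sum>i\<le>h. (\<Sum>m\<le>h. of_nat (m choose i) * s m) * (z - 1) ^ i)"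
    by (subst sum.swap) (simp add: sum_distrib_right)
  finally show ?thesis .
qed

text \<open>The substitution \<open>t = (1 - y - Q y) / (1 - y + Q y)\<close> turns \<open>(1 - t, 1 + t)\<close> into
  \<open>(2 Q y, 2 (1 - y))\<close> up to the common factor \<open>2 / (1 - y + Q y)\<close>.\<close>
lemma enum_moebius_substitution:
  fixes a rho :: "nat \<Rightarrow> real" and Q y :: real
  assumes rep: "\<And>t. (\<Sum>j\<le>n. a j * (1 - t) ^ j * (1 + t) ^ (n - j)) = (\<Sum>i\<le>h. rho i * (t\<^sup>2 - 1) ^ i)"
    and h: "2*h \<le> n" and d: "1 - y + Q*y \<noteq> 0"
  shows "(\<Sum>j\<le>n. a j * Q ^ j * y ^ j * (1 - y) ^ (n - j))
       = (\<Sum>i\<le>h. (rho i * (-4*Q) ^ i / 2 ^ n) * (y * (1 - y)) ^ i * (1 - y + Q*y) ^ (n - 2*i))"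
proof -
  define d where "d = 1 - y + Q*y"
  define t where "t = (1 - y - Q*y) / d"
  have d0: "d \<noteq> 0"
    using d by (simp add: d_def)
  have t1: "1 - t = 2*Q*y / d" and t2: "1 + t = 2*(1 - y) / d"
    using d0 by (simp_all add: t_def d_def field_simps)
  have t3: "t\<^sup>2 - 1 = -4*Q*(y*(1 - y)) / d\<^sup>2"
  proof -
    have "t\<^sup>2 - 1 = - ((1 - t) * (1 + t))"
      by (simp add: power2_eq_square algebra_simps)
    then show ?thesis
      using d0 by (simp add: t1 t2 power2_eq_square field_simps)
  qed
  have "(\<Sum>j\<le>n. a j * (1 - t) ^ j * (1 + t) ^ (n - j)) = (2/d) ^ n * (\<Sum>j\<le>n. a j * Q ^ j * y ^ j * (1 - y) ^ (n - j))"
    unfolding sum_distrib_left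
  proof (intro sum.cong refl)
    fix j assume "j \<in> {..n}"
    then have "(2/d) ^ n = (2/d) ^ j * (2/d) ^ (n - j)"
      by (simp flip: power_add)
    then show "a j * (1 - t) ^ j * (1 + t) ^ (n - j) = (2/d) ^ n * (a j * Q ^ j * y ^ j * (1 - y) ^ (n - j))"
      unfolding t1 t2 power_divide power_mult_distrib using d0 by (simp add: field_simps)
  qed
  moreover have "(\<Sum>i\<le>h. rho i * (t\<^sup>2 - 1) ^ i)
      = (2/d) ^ n * (\<Sum>i\<le>h. (rho i * (-4*Q) ^ i / 2 ^ n) * (y * (1 - y)) ^ i * d ^ (n - 2*i))"
    unfolding sum_distrib_left
  proof (intro sum.cong refl)
    fix i assume "i \<in> {..h}"
    then have "d ^ n = d ^ (n - 2*i) * (d\<^sup>2) ^ i"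
      using h by (simp flip: power_add power_mult)
    then show "rho i * (t\<^sup>2 - 1) ^ i = (2/d) ^ n * ((rho i * (-4*Q) ^ i / 2 ^ n) * (y * (1 - y)) ^ i * d ^ (n - 2*i))"
      unfolding t3 power_divide power_mult_distrib using d0 by (simp add: field_simps)
  qed
  ultimately show ?thesis
    using rep[of t] d0 by (simp add: d_def)
qed

lemma poly_eqI_of_nat:
  fixes p r :: "'a::{idom, ring_char_0} poly"
  assumes "\<And>m::nat. poly p (of_nat m) = poly r (of_nat m)"
  shows "p = r"
proof (rule ccontr)
  assume "p \<noteq> r"
  then have "finite {x. poly (p - r) x = 0}"
    by (intro poly_roots_finite) simp
  moreover have "range (of_nat :: nat \<Rightarrow> 'a) \<subseteq> {x. poly (p - r) x = 0}"
    using assms by auto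
  ultimately show False
    using finite_subset range_inj_infinite[of "of_nat :: nat \<Rightarrow> 'a"] by (auto simp: inj_on_def)
qed

lemma enum_fps_eq_lagrange_basis_sum:
  fixes a rho :: "nat \<Rightarrow> real" and Q :: real
  assumes Q: "1 \<le> Q" and h: "2*h \<le> n"
    and rep: "\<And>t. (\<Sum>j\<le>n. a j * (1 - t) ^ j * (1 + t) ^ (n - j)) = (\<Sum>i\<le>h. rho i * (t\<^sup>2 - 1) ^ i)"
  shows "(\<Sum>j\<le>n. fps_const (a j * Q ^ j) * (fps_X ^ j * (1 - fps_X) ^ (n - j)))
    = (\<Sum>i\<le>h. fps_const (rho i * (-4*Q) ^ i / 2 ^ n) * lagrange_basis n (Q - 1) i)"
proof -
  define c where "c i = rho i * (-4*Q) ^ i / 2 ^ n" for i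
  define Apol where "Apol = (\<Sum>j\<le>n. smult (a j * Q ^ j) ([:0, 1:] ^ j * [:1, -1:] ^ (n - j)))"
  define Cpol where "Cpol = (\<Sum>i\<le>h. smult (c i) ([:0, 1, -1:] ^ i * [:1, Q - 1:] ^ (n - 2*i)))"
  have "poly Apol y = poly Cpol y" if "0 \<le> y" for y
  proof -
    have "0 \<le> (Q - 1) * y"
      using Q that by simp
    then have "1 - y + Q*y \<noteq> 0"
      by (simp add: algebra_simps)
    then have "(\<Sum>j\<le>n. a j * Q ^ j * y ^ j * (1 - y) ^ (n - j))
        = (\<Sum>i\<le>h. c i * (y * (1 - y)) ^ i * (1 - y + Q*y) ^ (n - 2*i))"
      unfolding c_def by (rule enum_moebius_substitution[OF rep h])
    then show ?thesis
      by (simp add: Apol_def Cpol_def poly_sum algebra_simps)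
  qed
  then have "fps_of_poly Apol = fps_of_poly Cpol"
    by (metis of_nat_0_le_iff poly_eqI_of_nat)
  moreover have "fps_of_poly [:1, -1:] = (1 - fps_X :: real fps)"
    and "fps_of_poly [:0, 1, -1:] = (fps_X * (1 - fps_X) :: real fps)"
    and "fps_of_poly [:1, Q - 1:] = 1 + fps_const (Q - 1) * fps_X"
    by (simp_all add: fps_of_poly_pCons algebra_simps)
  ultimately show ?thesis
    by (simp add: Apol_def Cpol_def c_def lagrange_basis_def fps_of_poly_sum fps_of_poly_smult
        fps_of_poly_mult fps_of_poly_power)
qed

lemma enum_lagrange_basis_expansion:
  fixes a sg :: "nat \<Rightarrow> real" and Q :: real
  assumes Q: "1 \<le> Q"
    and sym: "\<And>j. j \<le> n \<Longrightarrow> a j = a (n - j)"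
    and gen: "\<And>y. (\<Sum>j\<le>n. a j * (1 - y) ^ j * (1 + y) ^ (n - j)) = (\<Sum>t\<le>n. sg t * y ^ t)"
    and sg: "\<And>t. 0 \<le> sg t"
  obtains c where "\<And>i. 0 \<le> (-1) ^ i * c i"
    and "(\<Sum>j\<le>n. fps_const (a j * Q ^ j) * (fps_X ^ j * (1 - fps_X) ^ (n - j)))
        = (\<Sum>i\<le>n div 2. fps_const (c i) * lagrange_basis n (Q - 1) i)"
proof
  define rho where "rho i = (\<Sum>m\<le>n div 2. of_nat (m choose i) * sg (2*m))" for i
  define c where "c i = rho i * (-4*Q) ^ i / 2 ^ n" for i
  show "0 \<le> (-1) ^ i * c i" for i
  proof -
    have "(-1) ^ i * (-4*Q) ^ i = (4*Q) ^ i"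
      by (simp only: power_mult_distrib[symmetric]) simp
    then have "(-1) ^ i * c i = rho i * (4*Q) ^ i / 2 ^ n"
      by (simp add: c_def)
    moreover have "0 \<le> rho i"
      unfolding rho_def using sg by (intro sum_nonneg) simp
    ultimately show ?thesis
      using Q by simp
  qed
  have "(\<Sum>j\<le>n. a j * (1 - t) ^ j * (1 + t) ^ (n - j)) = (\<Sum>i\<le>n div 2. rho i * (t\<^sup>2 - 1) ^ i)" for t
    using even_of_symmetric_enum[OF sym gen, of t]
      sum_powers_shift_one[where s="\<lambda>m. sg (2*m)" and h="n div 2" and z="t\<^sup>2"]
    by (simp add: rho_def)
  from enum_fps_eq_lagrange_basis_sum[OF Q _ this]
  show "(\<Sum>j\<le>n. fps_const (a j * Q ^ j) * (fps_X ^ j * (1 - fps_X) ^ (n - j)))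
      = (\<Sum>i\<le>n div 2. fps_const (c i) * lagrange_basis n (Q - 1) i)"
    by (simp add: c_def)
qed

lemma fps_one_minus_X_power_nth:
  "((1 - fps_X :: 'a::comm_ring_1 fps) ^ m) $ l = (-1) ^ l * of_nat (m choose l)"
proof (induction m arbitrary: l)
  case 0
  then show ?case
    by (cases l) simp_all
next
  case (Suc m)
  show ?case
  proof (cases l)
    case (Suc l')
    have "((1 - fps_X :: 'a fps) ^ Suc m) $ l = ((1 - fps_X) ^ m - fps_X * (1 - fps_X) ^ m) $ l"
      by (simp add: algebra_simps)
    also have "\<dots> = (-1) ^ l * of_nat (m choose l) - (-1) ^ l' * of_nat (m choose l')"
      using Suc.IH Suc by simp
    finally show ?thesis
      using Suc by (simp add: algebra_simps)
  qed (simp add: fps_power_zeroth)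
qed

text \<open>For the
  purities \<open>a = unitary_enum q n \<psi>\<close> and \<open>Q = q\<close> it is the Shor-Laflamme enumerator: the
  squared mass of the Pauli components of \<open>|\<psi>\<rangle>\<langle>\<psi>|\<close> of weight exactly \<open>w\<close>.\<close>
definition pauli_weight_enum :: "(nat \<Rightarrow> real) \<Rightarrow> real \<Rightarrow> nat \<Rightarrow> nat \<Rightarrow> real" where
  "pauli_weight_enum a Q n w = (\<Sum>j\<le>w. a j * Q ^ j * (-1) ^ (w - j) * of_nat ((n - j) choose (w - j)))"

lemma pauli_weight_enum_fps_nth:
  assumes "w \<le> n"
  shows "(\<Sum>j\<le>n. fps_const (a j * Q ^ j) * (fps_X ^ j * (1 - fps_X) ^ (n - j))) $ w = pauli_weight_enum a Q n w"
proof -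
  have "(\<Sum>j\<le>n. fps_const (a j * Q ^ j) * (fps_X ^ j * (1 - fps_X) ^ (n - j))) $ w
      = (\<Sum>j\<le>n. if w < j then 0 else a j * Q ^ j * (-1) ^ (w - j) * of_nat ((n - j) choose (w - j)))"
    unfolding fps_sum_nth fps_mult_left_const_nth fps_X_power_mult_nth fps_one_minus_X_power_nth
    by (intro sum.cong refl) simp
  also have "\<dots> = pauli_weight_enum a Q n w"
    unfolding pauli_weight_enum_def using assms by (intro sum.mono_neutral_cong_right) auto
  finally show ?thesis .
qed

lemma pauli_weight_enum_binomial:
  assumes low: "\<And>j. j \<le> w \<Longrightarrow> a j = of_nat (n choose j) / Q ^ j"
    and Q: "Q \<noteq> 0" and wn: "w \<le> n"
  shows "pauli_weight_enum a Q n w = (if w = 0 then 1 else 0)"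
proof -
  have "pauli_weight_enum a Q n w = (\<Sum>j\<le>w. of_nat (n choose w) * ((-1) ^ w * ((-1) ^ j * of_nat (w choose j))))"
    unfolding pauli_weight_enum_def
  proof (intro sum.cong refl)
    fix j assume j: "j \<in> {..w}"
    have "of_nat (n choose j) * of_nat ((n - j) choose (w - j)) = (of_nat (n choose w) * of_nat (w choose j) :: real)"
      using choose_mult[of j w n] j wn by (simp flip: of_nat_mult)
    moreover have "(-1::real) ^ (w - j) = (-1) ^ w * (-1) ^ j"
      using j by (simp add: power_diff_conv_inverse)
    ultimately show "a j * Q ^ j * (-1) ^ (w - j) * of_nat ((n - j) choose (w - j))
        = of_nat (n choose w) * ((-1) ^ w * ((-1) ^ j * of_nat (w choose j)))"
      using low[of j] j Q by (simp add: field_simps)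
  qed
  also have "\<dots> = of_nat (n choose w) * ((-1) ^ w * (\<Sum>j\<le>w. (-1) ^ j * of_nat (w choose j)))"
    by (simp add: sum_distrib_left)
  also have "\<dots> = (if w = 0 then 1 else 0)"
    using choose_alternating_sum[of w, where 'a=real] by auto
  finally show ?thesis .
qed

lemma lagrange_basis_nth:
  fixes a :: "'a::comm_ring_1"
  shows "j < i \<Longrightarrow> lagrange_basis n a i $ j = 0"
    and "lagrange_basis n a i $ i = 1"
    and "lagrange_basis n a i $ Suc i = of_nat (n - 2*i) * a - of_nat i"
proof -
  have shift: "lagrange_basis n a i $ j = (if j < i then 0 else ((1 - fps_X) ^ i * (1 + fps_const a * fps_X) ^ (n - 2*i)) $ (j - i))" for j
    by (simp add: lagrange_basis_def power_mult_distrib mult.assoc fps_X_power_mult_nth)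
  show "j < i \<Longrightarrow> lagrange_basis n a i $ j = 0"
    by (simp add: shift)
  show "lagrange_basis n a i $ i = 1"
    by (simp add: shift fps_power_zeroth)
  have nth1_power: "(f ^ p) $ Suc 0 = of_nat p * (f $ 0) ^ (p - 1) * f $ Suc 0" for f :: "'a fps" and p
  proof (induction p)
    case (Suc p)
    then show ?case
      by (cases p) (simp_all add: fps_mult_nth fps_power_zeroth algebra_simps)
  qed simp
  show "lagrange_basis n a i $ Suc i = of_nat (n - 2*i) * a - of_nat i"
    by (simp add: shift fps_mult_nth nth1_power fps_power_zeroth fps_one_minus_X_power_nth)
qed

lemma pauli_weight_enum_sub_lagrange:
  fixes a c :: "nat \<Rightarrow> real"
  assumes expand: "(\<Sum>j\<le>n. fps_const (a j * Q ^ j) * (fps_X ^ j * (1 - fps_X) ^ (n - j)))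
      = (\<Sum>i\<le>n div 2. fps_const (c i) * lagrange_basis n (Q - 1) i)"
    and N: "N \<le> n div 2" and j: "j \<le> N"
  shows "pauli_weight_enum a Q n j - (if j = 0 then 1 else 0)
    = (\<Sum>i\<le>j. (c i - lagrange_coeff n (Q - 1) i) * lagrange_basis n (Q - 1) i $ j)"
proof -
  have "pauli_weight_enum a Q n j = (\<Sum>i\<le>n div 2. c i * lagrange_basis n (Q - 1) i $ j)"
    using pauli_weight_enum_fps_nth[of j n a Q] j N by (simp add: expand fps_sum_nth)
  also have "\<dots> = (\<Sum>i\<le>N. c i * lagrange_basis n (Q - 1) i $ j)"
    using N j by (intro sum.mono_neutral_right) (auto simp: lagrange_basis_nth(1))
  finally have "pauli_weight_enum a Q n j - (if j = 0 then 1 else 0)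
      = (\<Sum>i\<le>N. (c i - lagrange_coeff n (Q - 1) i) * lagrange_basis n (Q - 1) i $ j)"
    using lagrange_basis_expansion_one[of N n j "Q - 1"] N j
    by (simp add: fps_sum_nth left_diff_distrib sum_subtractf)
  also have "\<dots> = (\<Sum>i\<le>j. (c i - lagrange_coeff n (Q - 1) i) * lagrange_basis n (Q - 1) i $ j)"
    using j by (intro sum.mono_neutral_right) (auto simp: lagrange_basis_nth(1))
  finally show ?thesis .
qed

lemma unitriangular_solution_zero:
  fixes e :: "nat \<Rightarrow> 'a::comm_ring_1" and M :: "nat \<Rightarrow> nat \<Rightarrow> 'a"
  assumes diag: "\<And>i. M i i = 1" and sol: "\<And>j. j \<le> k \<Longrightarrow> (\<Sum>i\<le>j. e i * M i j) = 0"
  shows "j \<le> k \<Longrightarrow> e j = 0"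
proof (induction j rule: less_induct)
  case (less j)
  have "(\<Sum>i\<le>j. e i * M i j) = (\<Sum>i<j. e i * M i j) + e j"
    by (simp add: lessThan_Suc_atMost[symmetric] diag)
  moreover have "(\<Sum>i<j. e i * M i j) = 0"
    using less by (intro sum.neutral) auto
  ultimately show ?case
    using sol[OF less.prems] by simp
qed

lemma enumerators_contradiction:
  fixes q n k :: nat and a sg :: "nat \<Rightarrow> real"
  defines "kappa \<equiv> real (k+1) * (2 * real q - 1) - (real q - 1) * real n"
  assumes q: "2 \<le> q" and k: "odd k" and kn: "k + 2 \<le> n div 2"
    and kappa_nonneg: "0 \<le> kappa"
    and ineq: "kappa * lagrange_coeff n (real q - 1) (k+1) < lagrange_coeff n (real q - 1) (k+2)"
    and sym: "\<And>j. j \<le> n \<Longrightarrow> a j = a (n - j)"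
    and low: "\<And>j. j \<le> k \<Longrightarrow> a j = real (n choose j) / real q ^ j"
    and sg: "\<And>t. 0 \<le> sg t"
    and gen: "\<And>y. (\<Sum>j\<le>n. a j * (1 - y) ^ j * (1 + y) ^ (n - j)) = (\<Sum>t\<le>n. sg t * y ^ t)"
    and weight: "0 \<le> pauli_weight_enum a (real q) n (k+2)"
  shows False
proof -
  define Q where "Q = real q"
  define M where "M i j = lagrange_basis n (Q - 1) i $ j" for i j
  define al where "al = lagrange_coeff n (Q - 1)"
  have Q: "2 \<le> Q"
    using q by (simp add: Q_def)
  from Q have "1 \<le> Q"
    by simp
  then obtain c where sign: "\<And>i. 0 \<le> (-1) ^ i * c i"
    and expand: "(\<Sum>j\<le>n. fps_const (a j * Q ^ j) * (fps_X ^ j * (1 - fps_X) ^ (n - j)))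
        = (\<Sum>i\<le>n div 2. fps_const (c i) * lagrange_basis n (Q - 1) i)"
    by (rule enum_lagrange_basis_expansion[OF _ sym gen sg]) auto
  have diff: "pauli_weight_enum a Q n j - (if j = 0 then 1 else 0) = (\<Sum>i\<le>j. (c i - al i) * M i j)"
    if "j \<le> k + 2" for j
    using pauli_weight_enum_sub_lagrange[OF expand kn that] by (simp add: M_def al_def)
  have agree: "c i - al i = 0" if "i \<le> k" for i
  proof (rule unitriangular_solution_zero[where M=M, OF _ _ that])
    show "M i i = 1" for i
      by (simp add: M_def lagrange_basis_nth(2))
    show "(\<Sum>i\<le>j. (c i - al i) * M i j) = 0" if "j \<le> k" for j
      using diff[of j] pauli_weight_enum_binomial[of j a n Q] low that kn Q by (simp add: Q_def)
  qed
  have "M (k+1) (k+2) = - kappa"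
    using kn by (simp add: M_def lagrange_basis_nth(3) kappa_def Q_def of_nat_diff algebra_simps)
  then have "pauli_weight_enum a Q n (k + 2) = kappa * al (k+1) - kappa * c (k+1) + c (k+2) - al (k+2)"
    using diff[of "k + 2"] agree by (simp add: M_def lagrange_basis_nth(2) algebra_simps)
  moreover have "0 \<le> kappa * c (k+1)"
    using sign[of "k+1"] k kappa_nonneg by simp
  moreover have "c (k+2) \<le> 0"
    using sign[of "k+2"] k by simp
  ultimately show False
    using weight ineq unfolding Q_def al_def by linarith
qed

section \<open>Partial traces and purities\<close>

type_synonym state = "nat list \<Rightarrow> complex"
type_synonym operator = "nat list \<Rightarrow> nat list \<Rightarrow> complex"

text \<open>The computational basis of the parties in \<open>W\<close>, embedded as words of length \<open>n\<close>
  that are \<open>0\<close> outside \<open>W\<close>.\<close>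
definition words_on :: "nat \<Rightarrow> nat \<Rightarrow> nat set \<Rightarrow> nat list set" where
  "words_on q n W = {z. length z = n \<and> (\<forall>i<n. z!i < q) \<and> (\<forall>i<n. i \<notin> W \<longrightarrow> z!i = 0)}"

definition combine_on :: "nat \<Rightarrow> nat set \<Rightarrow> nat list \<Rightarrow> nat list \<Rightarrow> nat list" where
  "combine_on n K x y = map (\<lambda>i. if i \<in> K then x!i else y!i) [0..<n]"

lemma combine_on_length [simp]: "length (combine_on n K x y) = n"
  by (simp add: combine_on_def)

lemma combine_on_nth [simp]: "i < n \<Longrightarrow> combine_on n K x y ! i = (if i \<in> K then x!i else y!i)"
  by (simp add: combine_on_def)

lemma basis_eq_words_on: "basis q n = words_on q n {..<n}"
  by (auto simp: basis_def words_on_def in_set_conv_nth subset_iff)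

lemma mem_basis_iff: "x \<in> basis q n \<longleftrightarrow> length x = n \<and> (\<forall>i<n. x!i < q)"
  by (auto simp: basis_def in_set_conv_nth subset_iff)

lemma words_on_subset_basis: "words_on q n W \<subseteq> basis q n"
  by (auto simp: words_on_def mem_basis_iff)

lemma finite_basis: "finite (basis q n)"
proof -
  have "basis q n \<subseteq> {xs. set xs \<subseteq> {..<q} \<and> length xs = n}" by (auto simp: basis_def)
  moreover have "finite {xs. set xs \<subseteq> {..<q} \<and> length xs = n}" by (rule finite_lists_length_eq) simp
  ultimately show ?thesis by (rule finite_subset)
qed

lemma finite_words_on: "finite (words_on q n W)"
  using finite_subset[OF words_on_subset_basis finite_basis] .

lemma combine_on_in_basis: "x \<in> basis q n \<Longrightarrow> y \<in> basis q n \<Longrightarrow> combine_on n K x y \<in> basis q n"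
  by (auto simp: mem_basis_iff)

lemma nth_equality_lengthI: "length x = n \<Longrightarrow> length y = n \<Longrightarrow> (\<And>i. i < n \<Longrightarrow> x!i = y!i) \<Longrightarrow> x = y"
  by (metis nth_equalityI)

lemma card_words_on:
  assumes "W \<subseteq> {..<n}" and q0: "0 < q"
  shows "card (words_on q n W) = q ^ card W"
proof -
  define f where "f z = restrict (\<lambda>i. z!i) W" for z :: "nat list"
  have "bij_betw f (words_on q n W) (PiE W (\<lambda>_. {..<q}))"
    by (rule bij_betw_byWitness[where f'="\<lambda>g. map (\<lambda>i. if i \<in> W then g i else 0) [0..<n]"])
      (use assms in \<open>auto simp: f_def words_on_def PiE_def Pi_def extensional_def fun_eq_iff
        intro!: nth_equality_lengthI[where n=n]\<close>)
  then have "card (words_on q n W) = card (PiE W (\<lambda>_. {..<q}))"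
    by (rule bij_betw_same_card)
  also have "\<dots> = q ^ card W"
    using assms by (simp add: card_PiE finite_subset)
  finally show ?thesis .
qed

lemma words_on_Un_bij:
  assumes "Wa \<inter> Wb = {}" and q0: "0 < q"
  shows "bij_betw (\<lambda>(u, v). combine_on n Wa u v) (words_on q n Wa \<times> words_on q n Wb) (words_on q n (Wa \<union> Wb))"
  by (rule bij_betw_byWitness[where f'="\<lambda>x. (combine_on n Wa x (replicate n 0), combine_on n Wa (replicate n 0) x)"])
    (use assms in \<open>auto simp: words_on_def disjoint_iff intro!: nth_equality_lengthI[where n=n]\<close>)

lemma sum_words_on_Un:
  assumes "Wa \<inter> Wb = {}" and q0: "0 < q"
  shows "(\<Sum>x\<in>words_on q n (Wa \<union> Wb). f x) = (\<Sum>u\<in>words_on q n Wa. \<Sum>v\<in>words_on q n Wb. f (combine_on n Wa u v))"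
proof -
  have "(\<Sum>x\<in>words_on q n (Wa \<union> Wb). f x) = (\<Sum>p\<in>words_on q n Wa \<times> words_on q n Wb. f ((\<lambda>(u,v). combine_on n Wa u v) p))"
    using sum.reindex_bij_betw[OF words_on_Un_bij[OF assms], of f] by simp
  also have "\<dots> = (\<Sum>u\<in>words_on q n Wa. \<Sum>v\<in>words_on q n Wb. f (combine_on n Wa u v))"
    by (simp add: sum.cartesian_product split_def)
  finally show ?thesis .
qed

lemma words_on_insert_bij:
  assumes "i \<notin> W" "i < n"
  shows "bij_betw (\<lambda>(c, z). z[i:=c]) ({..<q} \<times> words_on q n W) (words_on q n (insert i W))"
  by (rule bij_betw_byWitness[where f'="\<lambda>x. (x!i, x[i:=0])"])
    (use assms in \<open>auto simp: words_on_def nth_list_update intro!: nth_equality_lengthI[where n=n]\<close>)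

lemma sum_words_on_insert:
  assumes "i \<notin> W" "i < n"
  shows "(\<Sum>x\<in>words_on q n (insert i W). f x) = (\<Sum>c<q. \<Sum>z\<in>words_on q n W. f (z[i:=c]))"
proof -
  have "(\<Sum>x\<in>words_on q n (insert i W). f x) = (\<Sum>p\<in>{..<q} \<times> words_on q n W. f ((\<lambda>(c,z). z[i:=c]) p))"
    using sum.reindex_bij_betw[OF words_on_insert_bij[OF assms], of f] by simp
  also have "\<dots> = (\<Sum>c<q. \<Sum>z\<in>words_on q n W. f (z[i:=c]))"
    by (simp add: sum.cartesian_product split_def)
  finally show ?thesis .
qed

definition density :: "state \<Rightarrow> operator" where
  "density psi x y = psi x * cnj (psi y)"

definition ptrace :: "nat \<Rightarrow> nat \<Rightarrow> nat set \<Rightarrow> operator \<Rightarrow> operator" where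
  "ptrace q n K M a b = (\<Sum>z\<in>words_on q n ({..<n} - K). M (combine_on n K a z) (combine_on n K b z))"

definition frobenius_sq :: "nat \<Rightarrow> nat \<Rightarrow> nat set \<Rightarrow> operator \<Rightarrow> real" where
  "frobenius_sq q n K X = (\<Sum>a\<in>words_on q n K. \<Sum>b\<in>words_on q n K. (cmod (X a b))\<^sup>2)"

definition purity :: "nat \<Rightarrow> nat \<Rightarrow> nat set \<Rightarrow> operator \<Rightarrow> real" where
  "purity q n K M = frobenius_sq q n K (ptrace q n K M)"

text \<open>\<open>\<langle>\<psi>\<otimes>\<psi>| SWAP\<^sub>K |\<psi>\<otimes>\<psi>\<rangle>\<close>, where \<open>SWAP\<^sub>K\<close> exchanges the parties in \<open>K\<close> of the two copies.\<close>
definition swap_expect :: "nat \<Rightarrow> nat \<Rightarrow> state \<Rightarrow> nat set \<Rightarrow> complex" where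
  "swap_expect q n psi K = (\<Sum>x\<in>basis q n. \<Sum>y\<in>basis q n.
      psi x * psi y * cnj (psi (combine_on n K y x)) * cnj (psi (combine_on n K x y)))"

lemma frobenius_sq_nonneg: "0 \<le> frobenius_sq q n K X"
  unfolding frobenius_sq_def by (intro sum_nonneg) auto

lemma combine_on_compl: "combine_on n ({..<n} - K) y x = combine_on n K x y"
  by (rule nth_equality_lengthI[where n=n]) auto

lemma swap_expect_compl: "swap_expect q n psi ({..<n} - K) = swap_expect q n psi K"
  unfolding swap_expect_def combine_on_compl by (intro sum.cong refl) (simp add: mult_ac)

lemma sum_basis_combine_on:
  assumes "K \<subseteq> {..<n}" "0 < q"
  shows "(\<Sum>x\<in>basis q n. f x) = (\<Sum>u\<in>words_on q n K. \<Sum>v\<in>words_on q n ({..<n} - K). f (combine_on n K u v))"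
  using sum_words_on_Un[where Wa=K and Wb="{..<n} - K" and q=q and n=n and f=f] assms by (simp add: basis_eq_words_on sup.absorb2)

lemma swap_expect_eq_purity:
  assumes K: "K \<subseteq> {..<n}" and q0: "0 < q"
  shows "swap_expect q n psi K = of_real (purity q n K (density psi))"
proof -
  define Zc where "Zc = words_on q n ({..<n} - K)"
  have m1: "combine_on n K (combine_on n K b z') (combine_on n K a z) = combine_on n K b z" for a b z z'
    by (rule nth_equality_lengthI[where n=n]) auto
  have m2: "combine_on n K (combine_on n K a z) (combine_on n K b z') = combine_on n K a z'" for a b z z'
    by (rule nth_equality_lengthI[where n=n]) auto
  have "swap_expect q n psi K = (\<Sum>a\<in>words_on q n K. \<Sum>z\<in>Zc. \<Sum>b\<in>words_on q n K. \<Sum>z'\<in>Zc.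
      psi (combine_on n K a z) * psi (combine_on n K b z') * cnj (psi (combine_on n K b z)) * cnj (psi (combine_on n K a z')))"
    unfolding swap_expect_def sum_basis_combine_on[OF K q0] m1 m2 Zc_def ..
  also have "\<dots> = (\<Sum>a\<in>words_on q n K. \<Sum>b\<in>words_on q n K. \<Sum>z\<in>Zc. \<Sum>z'\<in>Zc.
      psi (combine_on n K a z) * psi (combine_on n K b z') * cnj (psi (combine_on n K b z)) * cnj (psi (combine_on n K a z')))"
    by (rule sum.cong[OF refl]) (rule sum.swap)
  also have "\<dots> = (\<Sum>a\<in>words_on q n K. \<Sum>b\<in>words_on q n K. of_real ((cmod (ptrace q n K (density psi) a b))\<^sup>2))"
    unfolding complex_norm_square ptrace_def density_def Zc_def cnj_sum sum_product
    by (intro sum.cong refl) (simp add: mult_ac)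
  also have "\<dots> = of_real (purity q n K (density psi))"
    by (simp add: purity_def frobenius_sq_def)
  finally show ?thesis .
qed

lemma reduced_eq_ptrace:
  assumes S: "S \<subseteq> {..<n}" and q0: "0 < q" and a: "a \<in> basis q n" and b: "b \<in> basis q n"
  shows "reduced q n psi S a b = ptrace q n S (density psi) a b"
proof -
  define Zc where "Zc = words_on q n ({..<n} - S)"
  define ua where "ua = combine_on n S a (replicate n 0)"
  define vb where "vb = combine_on n S b (replicate n 0)"
  have ua: "ua \<in> words_on q n S" "vb \<in> words_on q n S"
    using a b q0 by (auto simp: ua_def vb_def words_on_def mem_basis_iff)
  have cond: "((\<forall>i<n. i \<in> S \<longrightarrow> combine_on n S u z ! i = a ! i \<and> combine_on n S v z' ! i = b ! i) \<and>
           (\<forall>i<n. i \<notin> S \<longrightarrow> combine_on n S u z ! i = combine_on n S v z' ! i))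
        \<longleftrightarrow> (u = ua \<and> z' = z \<and> v = vb)" (is "?agree \<longleftrightarrow> ?eq")
    if mem: "u \<in> words_on q n S" "v \<in> words_on q n S" "z \<in> Zc" "z' \<in> Zc" for u v z z'
  proof
    show ?eq if ?agree
      using that mem by (auto simp: ua_def vb_def Zc_def words_on_def intro!: nth_equality_lengthI[where n=n])
    show ?agree if ?eq
      using that by (auto simp: ua_def vb_def)
  qed
  have "reduced q n psi S a b = (\<Sum>u\<in>words_on q n S. \<Sum>z\<in>Zc. \<Sum>v\<in>words_on q n S. \<Sum>z'\<in>Zc.
      if u = ua \<and> z' = z \<and> v = vb then psi (combine_on n S u z) * cnj (psi (combine_on n S v z')) else 0)"
    unfolding reduced_def sum_basis_combine_on[OF S q0] Zc_def[symmetric]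
    by (intro sum.cong refl, subst cond) (simp_all add: Zc_def)
  also have "\<dots> = (\<Sum>u\<in>words_on q n S. \<Sum>z\<in>Zc. if u = ua then psi (combine_on n S u z) * cnj (psi (combine_on n S vb z)) else 0)"
    using ua by (intro sum.cong refl)
      (simp add: if_distrib[symmetric] if_if_eq_conj[symmetric] sum.delta' finite_words_on Zc_def cong: if_cong)
  also have "\<dots> = (\<Sum>z\<in>Zc. psi (combine_on n S ua z) * cnj (psi (combine_on n S vb z)))"
    using ua by (subst sum.swap) (simp add: finite_words_on Zc_def)
  also have "\<dots> = ptrace q n S (density psi) a b"
  proof -
    have "combine_on n S ua z = combine_on n S a z" "combine_on n S vb z = combine_on n S b z" for z
      by (auto simp: ua_def vb_def intro!: nth_equality_lengthI[where n=n])
    then show ?thesis by (simp add: ptrace_def density_def Zc_def)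
  qed
  finally show ?thesis .
qed

lemma ptrace_ptrace:
  assumes RS: "R \<subseteq> S" and S: "S \<subseteq> {..<n}" and q0: "0 < q"
  shows "ptrace q n R M a b = (\<Sum>w\<in>words_on q n (S - R). ptrace q n S M (combine_on n (S-R) w a) (combine_on n (S-R) w b))"
proof -
  have U: "{..<n} - R = (S - R) \<union> ({..<n} - S)" using RS S by auto
  have D: "(S - R) \<inter> ({..<n} - S) = {}" by auto
  have e: "combine_on n R c (combine_on n (S - R) w z) = combine_on n S (combine_on n (S-R) w c) z" for c w z
    using RS by (auto intro!: nth_equality_lengthI[where n=n])
  show ?thesis
    unfolding ptrace_def U sum_words_on_Un[OF D q0] e ..
qed

lemma ptrace_k_uniform:
  assumes kuni: "k_uniform q n k psi" and q0: "0 < q"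
    and R: "R \<subseteq> {..<n}" and Rk: "card R \<le> k" and kn: "k \<le> n"
    and a: "a \<in> basis q n" and b: "b \<in> basis q n"
  shows "ptrace q n R (density psi) a b = (if \<forall>i\<in>R. a!i = b!i then 1 / of_nat q ^ card R else 0)"
proof -
  obtain S where RS: "R \<subseteq> S" and S: "S \<subseteq> {..<n}" and cS: "card S = k"
    using exists_subset_between[of R k "{..<n}"] Rk kn R by auto
  have finS: "finite S" using S finite_subset by blast
  have redS: "ptrace q n S (density psi) a' b' = (if \<forall>i\<in>S. a'!i = b'!i then 1 / of_nat (q ^ k) else 0)"
    if "a' \<in> basis q n" "b' \<in> basis q n" for a' b'
  proof -
    have "reduced q n psi S a' b' = (if \<forall>i\<in>S. a'!i = b'!i then 1 / of_nat (q ^ k) else 0)"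
      using kuni S cS that unfolding k_uniform_def by blast
    then show ?thesis using reduced_eq_ptrace[OF S q0 that] by simp
  qed
  have mb: "combine_on n (S-R) w c \<in> basis q n" if "w \<in> words_on q n (S-R)" "c \<in> basis q n" for w c
    using that words_on_subset_basis combine_on_in_basis by blast
  have cond: "(\<forall>i\<in>S. combine_on n (S-R) w a ! i = combine_on n (S-R) w b ! i) = (\<forall>i\<in>R. a!i = b!i)" for w
    using RS S by (auto simp: subset_iff)
  have "ptrace q n R (density psi) a b = (\<Sum>w\<in>words_on q n (S - R). (if \<forall>i\<in>R. a!i = b!i then 1 / of_nat (q ^ k) else 0))"
    unfolding ptrace_ptrace[OF RS S q0] using a b by (intro sum.cong refl) (simp add: redS mb cond)
  also have "\<dots> = of_nat (card (words_on q n (S - R))) * (if \<forall>i\<in>R. a!i = b!i then 1 / of_nat (q ^ k) else 0)"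
    by simp
  also have "card (words_on q n (S - R)) = q ^ (k - card R)"
    using card_words_on[of "S - R" n q] S q0 RS finS cS by (auto simp: card_Diff_subset finite_subset)
  also have "of_nat (q ^ (k - card R)) * (if \<forall>i\<in>R. a!i = b!i then 1 / of_nat (q ^ k) else 0)
      = (if \<forall>i\<in>R. a!i = b!i then 1 / of_nat q ^ card R else (0::complex))"
  proof -
    have "(of_nat q :: complex) ^ k = of_nat q ^ (k - card R) * of_nat q ^ card R"
      using Rk by (simp flip: power_add)
    then have "of_nat (q ^ (k - card R)) * (1 / of_nat (q ^ k)) = (1 / of_nat q ^ card R :: complex)"
      using q0 by (simp add: field_simps)
    then show ?thesis by simp
  qed
  finally show ?thesis .
qed

lemma purity_k_uniform:
  assumes kuni: "k_uniform q n k psi" and q0: "0 < q"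
    and R: "R \<subseteq> {..<n}" and Rk: "card R \<le> k" and kn: "k \<le> n"
  shows "purity q n R (density psi) = 1 / real q ^ card R"
proof -
  have "purity q n R (density psi) = (\<Sum>a\<in>words_on q n R. \<Sum>b\<in>words_on q n R. if a = b then (1 / real q ^ card R)\<^sup>2 else 0)"
    unfolding purity_def frobenius_sq_def
  proof (intro sum.cong refl)
    fix a b assume a: "a \<in> words_on q n R" and b: "b \<in> words_on q n R"
    have ab: "a \<in> basis q n" "b \<in> basis q n"
      using a b words_on_subset_basis by auto
    have "(\<forall>i\<in>R. a!i = b!i) = (a = b)"
      using a b R by (auto simp: words_on_def intro!: nth_equality_lengthI[where n=n])
    then show "(cmod (ptrace q n R (density psi) a b))\<^sup>2 = (if a = b then (1 / real q ^ card R)\<^sup>2 else 0)"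
      using ptrace_k_uniform[OF kuni q0 R Rk kn ab] by (simp add: norm_divide norm_power)
  qed
  also have "\<dots> = real (card (words_on q n R)) * (1 / real q ^ card R)\<^sup>2"
    by (simp add: finite_words_on)
  also have "\<dots> = 1 / real q ^ card R"
    using q0 by (simp add: card_words_on[OF R q0] power2_eq_square field_simps)
  finally show ?thesis .
qed

section \<open>Shadow and exact-weight inequalities\<close>

text \<open>\<open>depolarize_at q i M\<close> is \<open>(I/q) \<otimes> tr\<^sub>i M\<close> at party \<open>i\<close>, so \<open>traceless_at q i M\<close> is the part
  of \<open>M\<close> that is traceless at party \<open>i\<close>.\<close>
definition depolarize_at :: "nat \<Rightarrow> nat \<Rightarrow> operator \<Rightarrow> operator" where
  "depolarize_at q i X a b = (if a!i = b!i then (1 / of_nat q) * (\<Sum>c<q. X (a[i:=c]) (b[i:=c])) else 0)"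

definition traceless_at :: "nat \<Rightarrow> nat \<Rightarrow> operator \<Rightarrow> operator" where
  "traceless_at q i M a b = M a b - depolarize_at q i M a b"

lemma combine_on_list_update:
  assumes "i \<in> K" "length a = n"
  shows "(combine_on n K a z)[i:=c] = combine_on n K (a[i:=c]) z"
proof (rule nth_equality_lengthI[where n=n])
  fix j assume "j < n"
  then show "(combine_on n K a z)[i:=c] ! j = combine_on n K (a[i:=c]) z ! j"
    using assms by (cases "j = i") (auto simp: nth_list_update)
qed simp_all

lemma ptrace_traceless_at:
  assumes iK: "i \<in> K" and K: "K \<subseteq> {..<n}" and la: "length a = n" and lb: "length b = n"
  shows "ptrace q n K (traceless_at q i M) a b = ptrace q n K M a b - depolarize_at q i (ptrace q n K M) a b"
proof -
  have "i < n" using iK K by auto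
  then have ai: "combine_on n K a z ! i = a ! i" "combine_on n K b z ! i = b ! i" for z using iK by auto
  have "ptrace q n K (depolarize_at q i M) a b = depolarize_at q i (ptrace q n K M) a b"
    unfolding ptrace_def depolarize_at_def ai combine_on_list_update[OF iK la] combine_on_list_update[OF iK lb]
    by (simp add: sum_distrib_left sum.swap[of _ "{..<q}"])
  then show ?thesis by (simp add: ptrace_def traceless_at_def sum_subtractf)
qed

lemma sum_ptrace_list_update:
  assumes iK: "i \<in> K" and K: "K \<subseteq> {..<n}" and la: "length a = n" and lb: "length b = n"
  shows "(\<Sum>c<q. ptrace q n K M (a[i:=c]) (b[i:=c])) = ptrace q n (K - {i}) M a b"
proof -
  have i: "i < n" using iK K by auto
  have e: "{..<n} - (K - {i}) = insert i ({..<n} - K)" using i by auto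
  have m: "combine_on n (K - {i}) c (z[i:=d]) = combine_on n K (c[i:=d]) z" if "length c = n" "length z = n" for c z d
    using that i iK by (auto simp: nth_list_update intro!: nth_equality_lengthI[where n=n])
  have lz: "z \<in> words_on q n W \<Longrightarrow> length z = n" for z W by (simp add: words_on_def)
  have iW: "i \<notin> {..<n} - K" using iK by auto
  have "ptrace q n (K - {i}) M a b = (\<Sum>c<q. \<Sum>z\<in>words_on q n ({..<n} - K).
      M (combine_on n (K - {i}) a (z[i:=c])) (combine_on n (K - {i}) b (z[i:=c])))"
    unfolding ptrace_def e by (rule sum_words_on_insert[OF iW i])
  then show ?thesis
    using la lb by (simp add: ptrace_def m lz)
qed

lemma frobenius_sq_cong:
  "(\<And>a b. a \<in> words_on q n K \<Longrightarrow> b \<in> words_on q n K \<Longrightarrow> X a b = Y a b)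
    \<Longrightarrow> frobenius_sq q n K X = frobenius_sq q n K Y"
  unfolding frobenius_sq_def by (intro sum.cong refl) auto

lemma sum_mult_cnj_centered:
  fixes x :: "nat \<Rightarrow> complex"
  assumes q0: "0 < q"
  shows "(\<Sum>c<q. (x c - (\<Sum>d<q. x d) / of_nat q) * cnj (x c - (\<Sum>d<q. x d) / of_nat q))
       = (\<Sum>c<q. x c * cnj (x c)) - (\<Sum>d<q. x d) * cnj (\<Sum>d<q. x d) / of_nat q"
proof -
  define t where "t = (\<Sum>d<q. x d)"
  define m where "m = t / of_nat q"
  have "(\<Sum>c<q. (x c - m) * cnj (x c - m)) = (\<Sum>c<q. x c * cnj (x c) - (cnj m * x c + m * cnj (x c)) + m * cnj m)"
    by (intro sum.cong refl) (simp add: algebra_simps)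
  also have "\<dots> = (\<Sum>c<q. x c * cnj (x c)) - (cnj m * t + m * cnj t) + of_nat q * (m * cnj m)"
    by (simp add: sum.distrib sum_subtractf sum_distrib_left t_def cnj_sum)
  also have "(cnj m * t + m * cnj t) = 2 * (t * cnj t) / of_nat q" using q0 by (simp add: m_def field_simps)
  also have "of_nat q * (m * cnj m) = t * cnj t / of_nat q" using q0 by (simp add: m_def field_simps power2_eq_square)
  finally show ?thesis unfolding m_def t_def[symmetric] by (simp add: field_simps)
qed

lemma frobenius_sq_insert:
  assumes i: "i \<notin> K0" "i < n"
  shows "frobenius_sq q n (insert i K0) Y
    = (\<Sum>a\<in>words_on q n K0. \<Sum>b\<in>words_on q n K0. \<Sum>c<q. \<Sum>c'<q. (cmod (Y (a[i:=c]) (b[i:=c'])))\<^sup>2)"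
proof -
  have "frobenius_sq q n (insert i K0) Y = (\<Sum>c<q. \<Sum>a\<in>words_on q n K0. \<Sum>c'<q. \<Sum>b\<in>words_on q n K0. (cmod (Y (a[i:=c]) (b[i:=c'])))\<^sup>2)"
    unfolding frobenius_sq_def sum_words_on_insert[OF i] ..
  also have "\<dots> = (\<Sum>a\<in>words_on q n K0. \<Sum>c<q. \<Sum>b\<in>words_on q n K0. \<Sum>c'<q. (cmod (Y (a[i:=c]) (b[i:=c'])))\<^sup>2)"
    by (subst sum.swap) (intro sum.cong refl, rule sum.swap)
  also have "\<dots> = (\<Sum>a\<in>words_on q n K0. \<Sum>b\<in>words_on q n K0. \<Sum>c<q. \<Sum>c'<q. (cmod (Y (a[i:=c]) (b[i:=c'])))\<^sup>2)"
    by (intro sum.cong refl) (rule sum.swap)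
  finally show ?thesis .
qed

lemma sum_cmod_sq_sub_scaled_trace:
  fixes x :: "nat \<Rightarrow> nat \<Rightarrow> complex"
  assumes q0: "0 < q"
  defines "t \<equiv> \<Sum>d<q. x d d"
  shows "(\<Sum>c<q. \<Sum>c'<q. (cmod (x c c' - (if c = c' then t / of_nat q else 0)))\<^sup>2)
    = (\<Sum>c<q. \<Sum>c'<q. (cmod (x c c'))\<^sup>2) - (cmod t)\<^sup>2 / real q"
proof -
  have row: "(\<Sum>c'<q. (cmod (x c c' - (if c = c' then t / of_nat q else 0)))\<^sup>2)
      = (\<Sum>c'<q. (cmod (x c c'))\<^sup>2) - (cmod (x c c))\<^sup>2 + (cmod (x c c - t / of_nat q))\<^sup>2"
    if "c < q" for c
  proof -
    have "(\<Sum>c'<q. (cmod (x c c' - (if c = c' then t / of_nat q else 0)))\<^sup>2)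
        = (\<Sum>c'<q. (cmod (x c c'))\<^sup>2 + (if c' = c then (cmod (x c c - t / of_nat q))\<^sup>2 - (cmod (x c c))\<^sup>2 else 0))"
      by (intro sum.cong refl) auto
    then show ?thesis
      using that by (simp add: sum.distrib)
  qed
  have "complex_of_real (\<Sum>c<q. (cmod (x c c - t / of_nat q))\<^sup>2)
      = (\<Sum>c<q. (x c c - t / of_nat q) * cnj (x c c - t / of_nat q))"
    unfolding of_real_sum by (intro sum.cong refl) (rule complex_norm_square)
  also have "\<dots> = (\<Sum>c<q. x c c * cnj (x c c)) - t * cnj t / of_nat q"
    unfolding t_def by (rule sum_mult_cnj_centered[OF q0])
  also have "\<dots> = complex_of_real ((\<Sum>c<q. (cmod (x c c))\<^sup>2) - (cmod t)\<^sup>2 / real q)"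
    by (simp only: of_real_diff of_real_sum of_real_divide complex_norm_square of_real_of_nat_eq)
  finally have "(\<Sum>c<q. (cmod (x c c - t / of_nat q))\<^sup>2) = (\<Sum>c<q. (cmod (x c c))\<^sup>2) - (cmod t)\<^sup>2 / real q"
    by (simp only: of_real_eq_iff)
  then show ?thesis
    using row by (simp add: sum.distrib sum_subtractf)
qed

lemma purity_traceless_at:
  assumes iK: "i \<in> K" and K: "K \<subseteq> {..<n}" and q0: "0 < q"
  shows "purity q n K (traceless_at q i M) = purity q n K M - purity q n (K - {i}) M / real q"
proof -
  define K0 where "K0 = K - {i}"
  have i: "i \<notin> K0" "i < n" and KK: "K = insert i K0"
    using iK K by (auto simp: K0_def)
  define X where "X = ptrace q n K M"
  have len: "z \<in> words_on q n W \<Longrightarrow> length z = n" for z W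
    by (simp add: words_on_def)
  have "purity q n K (traceless_at q i M) = frobenius_sq q n K (\<lambda>a b. X a b - depolarize_at q i X a b)"
    unfolding purity_def X_def by (rule frobenius_sq_cong) (simp add: ptrace_traceless_at[OF iK K] len)
  also have "\<dots> = (\<Sum>a\<in>words_on q n K0. \<Sum>b\<in>words_on q n K0. \<Sum>c<q. \<Sum>c'<q.
        (cmod (X (a[i:=c]) (b[i:=c']) - (if c = c' then (\<Sum>d<q. X (a[i:=d]) (b[i:=d])) / of_nat q else 0)))\<^sup>2)"
    unfolding KK frobenius_sq_insert[OF i]
    using i by (intro sum.cong refl) (simp add: depolarize_at_def len)
  also have "\<dots> = (\<Sum>a\<in>words_on q n K0. \<Sum>b\<in>words_on q n K0. (\<Sum>c<q. \<Sum>c'<q. (cmod (X (a[i:=c]) (b[i:=c'])))\<^sup>2)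
        - (cmod (\<Sum>d<q. X (a[i:=d]) (b[i:=d])))\<^sup>2 / real q)"
    by (intro sum.cong refl) (rule sum_cmod_sq_sub_scaled_trace[OF q0])
  also have "\<dots> = frobenius_sq q n K X - frobenius_sq q n K0 (ptrace q n K0 M) / real q"
  proof -
    have "frobenius_sq q n K0 (ptrace q n K0 M)
        = (\<Sum>a\<in>words_on q n K0. \<Sum>b\<in>words_on q n K0. (cmod (\<Sum>d<q. X (a[i:=d]) (b[i:=d])))\<^sup>2)"
      unfolding frobenius_sq_def X_def K0_def using sum_ptrace_list_update[OF iK K] len
      by (intro sum.cong refl) simp
    then show ?thesis
      unfolding KK frobenius_sq_insert[OF i] by (simp add: sum_subtractf sum_divide_distrib)
  qed
  finally show ?thesis
    by (simp add: purity_def X_def K0_def)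
qed

lemma sum_Pow_insert:
  assumes "finite S" "i \<notin> S"
  shows "(\<Sum>U\<in>Pow (insert i S). f U) = (\<Sum>U\<in>Pow S. f U) + (\<Sum>U\<in>Pow S. f (insert i U))"
proof -
  have d: "Pow S \<inter> insert i ` Pow S = {}" using assms by auto
  have inj: "inj_on (insert i) (Pow S)"
    using assms unfolding inj_on_def by (metis PowD insert_absorb insert_ident subsetD)
  have "(\<Sum>U\<in>Pow (insert i S). f U) = (\<Sum>U\<in>Pow S. f U) + (\<Sum>U\<in>insert i ` Pow S. f U)"
    unfolding Pow_insert using assms d by (intro sum.union_disjoint) auto
  also have "(\<Sum>U\<in>insert i ` Pow S. f U) = (\<Sum>U\<in>Pow S. f (insert i U))"
    using inj by (simp add: sum.reindex)
  finally show ?thesis .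
qed

text \<open>The alternating sum is the purity of \<open>M\<close> made traceless at every party of \<open>S0\<close>.\<close>
lemma purity_inclusion_exclusion_nonneg:
  assumes fin: "finite S0" and q0: "0 < q"
  shows "V \<union> S0 \<subseteq> {..<n} \<Longrightarrow> V \<inter> S0 = {} \<Longrightarrow>
    0 \<le> (\<Sum>U\<in>Pow S0. (-1)^card U / real q ^ card U * purity q n ((V \<union> S0) - U) M)"
  using fin
proof (induction S0 arbitrary: V M rule: finite_induct)
  case empty
  then show ?case by (simp add: purity_def frobenius_sq_nonneg)
next
  case (insert i S)
  define K where "K U = (V \<union> insert i S) - U" for U
  have iS: "i \<notin> S" by fact
  have "(\<Sum>U\<in>Pow (insert i S). (-1)^card U / real q ^ card U * purity q n ((V \<union> insert i S) - U) M)
      = (\<Sum>U\<in>Pow S. (-1)^card U / real q ^ card U * purity q n (K U) M)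
        + (\<Sum>U\<in>Pow S. (-1)^card (insert i U) / real q ^ card (insert i U) * purity q n (K (insert i U)) M)"
    unfolding K_def by (rule sum_Pow_insert[OF insert(1) iS])
  also have "\<dots> = (\<Sum>U\<in>Pow S. (-1)^card U / real q ^ card U * (purity q n (K U) M - purity q n (K U - {i}) M / real q))"
  proof -
    have "(\<Sum>U\<in>Pow S. (-1)^card (insert i U) / real q ^ card (insert i U) * purity q n (K (insert i U)) M)
        = (\<Sum>U\<in>Pow S. - ((-1)^card U / real q ^ card U * (purity q n (K U - {i}) M / real q)))"
    proof (intro sum.cong refl)
      fix U assume "U \<in> Pow S"
      then have U: "U \<subseteq> S" "finite U" "i \<notin> U" using insert(1) iS finite_subset by auto
      then have "card (insert i U) = Suc (card U)" by simp
      moreover have "K (insert i U) = K U - {i}" by (auto simp: K_def)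
      ultimately show "(-1)^card (insert i U) / real q ^ card (insert i U) * purity q n (K (insert i U)) M
          = - ((-1)^card U / real q ^ card U * (purity q n (K U - {i}) M / real q))"
        by (simp add: field_simps)
    qed
    then show ?thesis by (simp add: sum.distrib[symmetric] sum_negf[symmetric] algebra_simps)
  qed
  also have "\<dots> = (\<Sum>U\<in>Pow S. (-1)^card U / real q ^ card U * purity q n ((insert i V \<union> S) - U) (traceless_at q i M))"
  proof (intro sum.cong refl)
    fix U assume "U \<in> Pow S"
    then have iK: "i \<in> K U" using iS by (auto simp: K_def)
    have Kn: "K U \<subseteq> {..<n}" using insert.prems by (auto simp: K_def)
    have "K U = (insert i V \<union> S) - U" by (auto simp: K_def)
    then show "(-1)^card U / real q ^ card U * (purity q n (K U) M - purity q n (K U - {i}) M / real q)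
        = (-1)^card U / real q ^ card U * purity q n ((insert i V \<union> S) - U) (traceless_at q i M)"
      using purity_traceless_at[OF iK Kn q0, of M] by simp
  qed
  also have "0 \<le> \<dots>"
    using insert.prems iS by (intro insert.IH) auto
  finally show ?case by simp
qed

lemma exact_weight_nonneg:
  assumes S: "S \<subseteq> {..<n}" and q0: "0 < q"
  shows "0 \<le> (\<Sum>R\<in>Pow S. (-1)^card (S - R) * real q ^ card R * purity q n R M)"
proof -
  have fin: "finite S" using S finite_subset by blast
  have "0 \<le> (\<Sum>U\<in>Pow S. (-1)^card U / real q ^ card U * purity q n (({} \<union> S) - U) M)"
    using purity_inclusion_exclusion_nonneg[OF fin q0, of "{}"] S by auto
  then have "0 \<le> real q ^ card S * (\<Sum>U\<in>Pow S. (-1)^card U / real q ^ card U * purity q n (S - U) M)"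
    by simp
  also have "\<dots> = (\<Sum>U\<in>Pow S. (-1)^card U * real q ^ (card S - card U) * purity q n (S - U) M)"
    unfolding sum_distrib_left
  proof (intro sum.cong refl)
    fix U assume "U \<in> Pow S"
    then have "card U \<le> card S" using fin by (simp add: card_mono)
    then have "real q ^ card S = real q ^ (card S - card U) * real q ^ card U" by (simp flip: power_add)
    then show "real q ^ card S * ((-1)^card U / real q ^ card U * purity q n (S - U) M)
        = (-1)^card U * real q ^ (card S - card U) * purity q n (S - U) M" using q0 by (simp add: field_simps)
  qed
  also have "\<dots> = (\<Sum>R\<in>Pow S. (-1)^card (S - R) * real q ^ card R * purity q n R M)"
  proof (rule sum.reindex_bij_witness[where i="\<lambda>U. S - U" and j="\<lambda>U. S - U"])
    fix U assume "U \<in> Pow S"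
    then have US: "U \<subseteq> S" by simp
    have "card (S - U) = card S - card U" using US fin by (simp add: card_Diff_subset finite_subset)
    moreover have "S - (S - U) = U" using US by auto
    ultimately show "(-1)^card (S - (S - U)) * real q ^ card (S - U) * purity q n (S - U) M
        = (-1)^card U * real q ^ (card S - card U) * purity q n (S - U) M" by simp
  qed auto
  finally show ?thesis .
qed

definition swap_on :: "nat \<Rightarrow> nat set \<Rightarrow> nat list \<times> nat list \<Rightarrow> nat list \<times> nat list" where
  "swap_on n K p = (combine_on n K (snd p) (fst p), combine_on n K (fst p) (snd p))"

lemma swap_on_swap_on: "swap_on n K (swap_on n K' p) = swap_on n (sym_diff K K') p"
  unfolding swap_on_def by (auto intro!: nth_equality_lengthI[where n=n])

lemma swap_on_empty: "p \<in> basis q n \<times> basis q n \<Longrightarrow> swap_on n {} p = p"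
  unfolding swap_on_def by (cases p) (auto simp: mem_basis_iff intro!: nth_equality_lengthI[where n=n])

lemma swap_on_basis: "p \<in> basis q n \<times> basis q n \<Longrightarrow> swap_on n K p \<in> basis q n \<times> basis q n"
  unfolding swap_on_def by (cases p) (auto intro: combine_on_in_basis)

lemma bij_swap_on: "bij_betw (swap_on n K) (basis q n \<times> basis q n) (basis q n \<times> basis q n)"
proof -
  have inv: "\<forall>p\<in>basis q n \<times> basis q n. swap_on n K (swap_on n K p) = p"
    by (auto simp: swap_on_swap_on swap_on_empty)
  have img: "swap_on n K ` (basis q n \<times> basis q n) \<subseteq> basis q n \<times> basis q n"
    using swap_on_basis by blast
  show ?thesis
    by (rule bij_betw_byWitness[OF inv inv img img])
qed

definition tensor_square :: "state \<Rightarrow> nat list \<times> nat list \<Rightarrow> complex" where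
  "tensor_square psi p = psi (fst p) * psi (snd p)"

lemma swap_expect_tensor_square: "swap_expect q n psi K = (\<Sum>p\<in>basis q n \<times> basis q n. tensor_square psi p * cnj (tensor_square psi (swap_on n K p)))"
  unfolding swap_expect_def tensor_square_def swap_on_def sum.cartesian_product by (intro sum.cong refl) (auto simp: mult_ac)

lemma sum_tensor_square_swap_on:
  "(\<Sum>p\<in>basis q n \<times> basis q n. tensor_square psi (swap_on n S p) * cnj (tensor_square psi (swap_on n S' p))) = swap_expect q n psi (sym_diff S S')"
proof -
  have "(\<Sum>p\<in>basis q n \<times> basis q n. tensor_square psi (swap_on n S p) * cnj (tensor_square psi (swap_on n S' p)))
      = (\<Sum>p\<in>basis q n \<times> basis q n. tensor_square psi (swap_on n S (swap_on n S p)) * cnj (tensor_square psi (swap_on n S' (swap_on n S p))))"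
    using sum.reindex_bij_betw[OF bij_swap_on[of n S q], of "\<lambda>p. tensor_square psi (swap_on n S p) * cnj (tensor_square psi (swap_on n S' p))"]
    by simp
  also have "\<dots> = (\<Sum>p\<in>basis q n \<times> basis q n. tensor_square psi p * cnj (tensor_square psi (swap_on n (sym_diff S S') p)))"
    by (intro sum.cong refl) (simp add: swap_on_swap_on swap_on_empty Un_commute)
  finally show ?thesis by (simp add: swap_expect_tensor_square)
qed

lemma neg_one_power_card_sym_diff:
  assumes "finite A" "finite B"
  shows "(-1::'a::ring_1) ^ card A * (-1) ^ card B = (-1) ^ card (sym_diff A B)"
proof -
  have "card (sym_diff A B) = card (A - B) + card (B - A)"
    using assms by (intro card_Un_disjoint) auto
  then have "card A + card B = card (sym_diff A B) + 2 * card (A \<inter> B)"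
    using card_Int_Diff[OF assms(1), of B] card_Int_Diff[OF assms(2), of A] by (simp add: Int_commute)
  then have "(-1::'a) ^ card A * (-1) ^ card B = (-1) ^ card (sym_diff A B) * ((-1) ^ 2) ^ card (A \<inter> B)"
    by (simp only: power_add[symmetric] power_mult[symmetric])
  then show ?thesis
    by simp
qed

lemma sum_Pow_sym_diff:
  assumes "S \<subseteq> A"
  shows "(\<Sum>S'\<in>Pow A. f (sym_diff S S')) = (\<Sum>U\<in>Pow A. f U)"
  by (rule sum.reindex_bij_witness[where i="sym_diff S" and j="sym_diff S"]) (use assms in auto)

text \<open>Rains' argument: for \<open>G = \<Sum>\<^sub>S (-1)\<^bsup>|S \<inter> T|\<^esup> SWAP\<^sub>S (\<psi>\<otimes>\<psi>)\<close> the squared norm of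
  \<open>G\<close> is \<open>2\<^sup>n\<close> times the sum, since \<open>SWAP\<^sub>S SWAP\<^sub>S\<^sub>' = SWAP\<^bsub>S \<triangle> S'\<^esub>\<close> and the signs are
  multiplicative.\<close>
lemma swap_expect_shadow_nonneg:
  assumes T: "T \<subseteq> {..<n}"
  shows "0 \<le> Re (\<Sum>U\<in>Pow {..<n}. (-1)^card (U \<inter> T) * swap_expect q n psi U)"
proof -
  define P where "P = Pow {..<n::nat}"
  define B2 where "B2 = basis q n \<times> basis q n"
  define eps where "eps S = (-1::complex)^card (S \<inter> T)" for S
  define G where "G p = (\<Sum>S\<in>P. eps S * tensor_square psi (swap_on n S p))" for p
  have finP: "finite P" by (simp add: P_def)
  have epsm: "eps S * eps S' = eps (sym_diff S S')" if "S \<in> P" "S' \<in> P" for S S'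
  proof -
    have "sym_diff (S \<inter> T) (S' \<inter> T) = sym_diff S S' \<inter> T" by auto
    moreover have "finite (S \<inter> T)" "finite (S' \<inter> T)" using that by (auto simp: P_def finite_subset)
    ultimately show ?thesis unfolding eps_def by (metis neg_one_power_card_sym_diff)
  qed
  have "(\<Sum>p\<in>B2. G p * cnj (G p)) = (\<Sum>S\<in>P. \<Sum>S'\<in>P. eps S * eps S' * swap_expect q n psi (sym_diff S S'))"
  proof -
    have "(\<Sum>p\<in>B2. G p * cnj (G p)) = (\<Sum>p\<in>B2. \<Sum>S\<in>P. \<Sum>S'\<in>P. eps S * eps S' * (tensor_square psi (swap_on n S p) * cnj (tensor_square psi (swap_on n S' p))))"
      unfolding G_def cnj_sum sum_product by (intro sum.cong refl) (simp add: eps_def mult_ac)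
    also have "\<dots> = (\<Sum>S\<in>P. \<Sum>S'\<in>P. eps S * eps S' * (\<Sum>p\<in>B2. tensor_square psi (swap_on n S p) * cnj (tensor_square psi (swap_on n S' p))))"
      by (simp add: sum_distrib_left sum.swap[of _ B2])
    finally show ?thesis unfolding B2_def sum_tensor_square_swap_on .
  qed
  also have "\<dots> = (\<Sum>S\<in>P. \<Sum>S'\<in>P. eps (sym_diff S S') * swap_expect q n psi (sym_diff S S'))"
    using epsm by (intro sum.cong refl) simp
  also have "\<dots> = (\<Sum>S\<in>P. \<Sum>U\<in>P. eps U * swap_expect q n psi U)"
    unfolding P_def by (intro sum.cong refl sum_Pow_sym_diff) simp
  also have "\<dots> = of_nat (card P) * (\<Sum>U\<in>P. eps U * swap_expect q n psi U)" by simp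
  finally have eq: "(\<Sum>p\<in>B2. G p * cnj (G p)) = of_nat (card P) * (\<Sum>U\<in>P. eps U * swap_expect q n psi U)" .
  have "0 \<le> Re (\<Sum>p\<in>B2. G p * cnj (G p))"
    by (simp add: sum_nonneg complex_mult_cnj power2_eq_square)
  then have "0 \<le> real (card P) * Re (\<Sum>U\<in>P. eps U * swap_expect q n psi U)"
    unfolding eq by (simp add: Re_sum)
  moreover have "card P > 0" using finP by (auto simp: P_def card_gt_0_iff)
  ultimately have "0 \<le> Re (\<Sum>U\<in>P. eps U * swap_expect q n psi U)"
    using zero_le_mult_iff by (metis of_nat_0_less_iff not_less)
  then show ?thesis by (simp only: P_def eps_def)
qed

section \<open>Weight enumerators of a pure state\<close>

definition ksubsets :: "nat \<Rightarrow> nat \<Rightarrow> nat set set" where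
  "ksubsets n j = {U. U \<subseteq> {..<n} \<and> card U = j}"

lemma finite_ksubsets: "finite (ksubsets n j)"
  by (rule finite_subset[of _ "Pow {..<n}"]) (auto simp: ksubsets_def)

lemma card_ksubsets: "card (ksubsets n j) = n choose j"
  using n_subsets[of "{..<n}" j] by (simp add: ksubsets_def)

lemma sum_Pow_by_card:
  fixes f :: "nat set \<Rightarrow> 'a::comm_monoid_add"
  shows "(\<Sum>U\<in>Pow {..<n}. f U) = (\<Sum>j\<le>n. \<Sum>U\<in>ksubsets n j. f U)"
proof -
  have "(\<Sum>j\<le>n. \<Sum>U\<in>{U. U \<in> Pow {..<n} \<and> card U = j}. f U) = (\<Sum>U\<in>Pow {..<n}. f U)"
  proof (rule sum.group)
    show "card ` Pow {..<n} \<subseteq> {..n}" by (auto simp: card_mono[of "{..<n}", simplified])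
  qed auto
  then show ?thesis by (simp add: ksubsets_def)
qed

lemma sum_Pow_sign_power:
  fixes y :: "'a::comm_ring_1"
  assumes U: "U \<subseteq> {..<n}"
  shows "(\<Sum>T\<in>Pow {..<n}. (-1) ^ card (U \<inter> T) * y ^ card T) = (1 - y) ^ card U * (1 + y) ^ (n - card U)"
proof -
  define w where "w i = (if i \<in> U then -1 else 1) * y" for i
  have "(\<Prod>i\<in>T. w i) = (-1) ^ card (U \<inter> T) * y ^ card T" if "T \<subseteq> {..<n}" for T
    using that finite_subset[OF that]
    by (simp add: w_def prod.distrib prod.If_cases Int_commute)
  then have "(\<Sum>T\<in>Pow {..<n}. (-1) ^ card (U \<inter> T) * y ^ card T) = (\<Prod>i\<in>{..<n}. w i + 1)"
    by (simp add: prod_add)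
  also have "\<dots> = (\<Prod>i\<in>{..<n}. if i \<in> U then 1 - y else 1 + y)"
    by (intro prod.cong refl) (simp add: w_def)
  also have "\<dots> = (1 - y) ^ card U * (1 + y) ^ (n - card U)"
    using U finite_subset[OF U] by (simp add: prod.If_cases Int_absorb1 Diff_eq[symmetric] card_Diff_subset)
  finally show ?thesis .
qed

lemma card_supersets:
  assumes R: "R \<subseteq> {..<n}" and Rw: "card R \<le> w"
  shows "card {S. S \<subseteq> {..<n} \<and> card S = w \<and> R \<subseteq> S} = (n - card R) choose (w - card R)"
proof -
  have finR: "finite R" using R finite_subset by blast
  have "bij_betw (\<lambda>S. S - R) {S. S \<subseteq> {..<n} \<and> card S = w \<and> R \<subseteq> S} {V. V \<subseteq> {..<n} - R \<and> card V = w - card R}"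
  proof (rule bij_betw_byWitness[where f'="\<lambda>V. V \<union> R"])
    show "\<forall>S\<in>{S. S \<subseteq> {..<n} \<and> card S = w \<and> R \<subseteq> S}. S - R \<union> R = S" by auto
    show "\<forall>V\<in>{V. V \<subseteq> {..<n} - R \<and> card V = w - card R}. V \<union> R - R = V" by auto
    show "(\<lambda>S. S - R) ` {S. S \<subseteq> {..<n} \<and> card S = w \<and> R \<subseteq> S} \<subseteq> {V. V \<subseteq> {..<n} - R \<and> card V = w - card R}"
      using finR by (auto simp: card_Diff_subset)
    show "(\<lambda>V. V \<union> R) ` {V. V \<subseteq> {..<n} - R \<and> card V = w - card R} \<subseteq> {S. S \<subseteq> {..<n} \<and> card S = w \<and> R \<subseteq> S}"
    proof
      fix S assume "S \<in> (\<lambda>V. V \<union> R) ` {V. V \<subseteq> {..<n} - R \<and> card V = w - card R}"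
      then obtain V where V: "V \<subseteq> {..<n} - R" "card V = w - card R" and S: "S = V \<union> R" by auto
      have "finite V" using V(1) finite_subset by blast
      moreover have "V \<inter> R = {}" using V(1) by auto
      ultimately have "card S = card V + card R" using S finR by (simp add: card_Un_disjoint)
      then show "S \<in> {S. S \<subseteq> {..<n} \<and> card S = w \<and> R \<subseteq> S}" using S V R Rw by auto
    qed
  qed
  then have "card {S. S \<subseteq> {..<n} \<and> card S = w \<and> R \<subseteq> S} = card {V. V \<subseteq> {..<n} - R \<and> card V = w - card R}"
    by (rule bij_betw_same_card)
  also have "\<dots> = card ({..<n} - R) choose (w - card R)" by (rule n_subsets) simp
  also have "card ({..<n} - R) = n - card R" using R finR by (simp add: card_Diff_subset)
  finally show ?thesis .
qed

definition unitary_enum :: "nat \<Rightarrow> nat \<Rightarrow> state \<Rightarrow> nat \<Rightarrow> real" where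
  "unitary_enum q n psi j = (\<Sum>U\<in>ksubsets n j. purity q n U (density psi))"

definition shadow :: "nat \<Rightarrow> nat \<Rightarrow> state \<Rightarrow> nat set \<Rightarrow> real" where
  "shadow q n psi T = (\<Sum>U\<in>Pow {..<n}. (-1) ^ card (U \<inter> T) * purity q n U (density psi))"

definition shadow_enum :: "nat \<Rightarrow> nat \<Rightarrow> state \<Rightarrow> nat \<Rightarrow> real" where
  "shadow_enum q n psi t = (\<Sum>T\<in>ksubsets n t. shadow q n psi T)"

lemma purity_density_compl:
  assumes "U \<subseteq> {..<n}" and "0 < q"
  shows "purity q n ({..<n} - U) (density psi) = purity q n U (density psi)"
  using swap_expect_compl[of q n psi U] swap_expect_eq_purity[OF assms(1,2), of psi]
    swap_expect_eq_purity[of "{..<n} - U" n q psi] assms(2)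
  by simp

lemma unitary_enum_symmetric:
  assumes "0 < q" and "j \<le> n"
  shows "unitary_enum q n psi j = unitary_enum q n psi (n - j)"
  unfolding unitary_enum_def
proof (rule sum.reindex_bij_witness[where i="\<lambda>U. {..<n} - U" and j="\<lambda>U. {..<n} - U"])
  fix U assume "U \<in> ksubsets n (n - j)"
  then show "{..<n} - ({..<n} - U) = U" and "{..<n} - U \<in> ksubsets n j"
    using assms by (auto simp: ksubsets_def card_Diff_subset finite_subset)
next
  fix U assume U: "U \<in> ksubsets n j"
  then show "{..<n} - ({..<n} - U) = U" and "{..<n} - U \<in> ksubsets n (n - j)"
    by (auto simp: ksubsets_def card_Diff_subset finite_subset)
  show "purity q n ({..<n} - U) (density psi) = purity q n U (density psi)"
    using U assms by (intro purity_density_compl) (auto simp: ksubsets_def)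
qed

lemma unitary_enum_k_uniform:
  assumes "k_uniform q n k psi" and "0 < q" and "k \<le> n" and "j \<le> k"
  shows "unitary_enum q n psi j = real (n choose j) / real q ^ j"
proof -
  have "purity q n U (density psi) = 1 / real q ^ j" if "U \<in> ksubsets n j" for U
    using that purity_k_uniform[OF assms(1,2)] assms(3,4) by (auto simp: ksubsets_def)
  then show ?thesis
    by (simp add: unitary_enum_def card_ksubsets)
qed

lemma shadow_nonneg:
  assumes "T \<subseteq> {..<n}" and "0 < q"
  shows "0 \<le> shadow q n psi T"
proof -
  have "(\<Sum>U\<in>Pow {..<n}. (-1) ^ card (U \<inter> T) * swap_expect q n psi U) = of_real (shadow q n psi T)"
    unfolding shadow_def of_real_sum
    using swap_expect_eq_purity[OF _ assms(2), of _ n psi] by (intro sum.cong refl) simp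
  then show ?thesis
    using swap_expect_shadow_nonneg[OF assms(1), of q psi] by simp
qed

lemma shadow_enum_nonneg: "0 < q \<Longrightarrow> 0 \<le> shadow_enum q n psi t"
  unfolding shadow_enum_def by (intro sum_nonneg shadow_nonneg) (auto simp: ksubsets_def)

lemma unitary_enum_shadow_enum:
  fixes y :: real
  shows "(\<Sum>j\<le>n. unitary_enum q n psi j * (1 - y) ^ j * (1 + y) ^ (n - j)) = (\<Sum>t\<le>n. shadow_enum q n psi t * y ^ t)"
proof -
  define pur where "pur U = purity q n U (density psi)" for U
  have "(\<Sum>j\<le>n. unitary_enum q n psi j * (1 - y) ^ j * (1 + y) ^ (n - j))
      = (\<Sum>j\<le>n. \<Sum>U\<in>ksubsets n j. pur U * (1 - y) ^ card U * (1 + y) ^ (n - card U))"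
    unfolding unitary_enum_def sum_distrib_right pur_def by (intro sum.cong refl) (auto simp: ksubsets_def)
  also have "\<dots> = (\<Sum>U\<in>Pow {..<n}. pur U * (1 - y) ^ card U * (1 + y) ^ (n - card U))"
    by (rule sum_Pow_by_card[symmetric])
  also have "\<dots> = (\<Sum>U\<in>Pow {..<n}. pur U * (\<Sum>T\<in>Pow {..<n}. (-1) ^ card (U \<inter> T) * y ^ card T))"
    by (intro sum.cong refl) (simp add: sum_Pow_sign_power mult.assoc)
  also have "\<dots> = (\<Sum>T\<in>Pow {..<n}. shadow q n psi T * y ^ card T)"
    unfolding shadow_def pur_def sum_distrib_left sum_distrib_right
    by (subst sum.swap) (intro sum.cong refl, simp add: mult_ac)
  also have "\<dots> = (\<Sum>t\<le>n. \<Sum>T\<in>ksubsets n t. shadow q n psi T * y ^ card T)"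
    by (rule sum_Pow_by_card)
  also have "\<dots> = (\<Sum>t\<le>n. shadow_enum q n psi t * y ^ t)"
    unfolding shadow_enum_def sum_distrib_right by (intro sum.cong refl) (auto simp: ksubsets_def)
  finally show ?thesis .
qed

lemma sum_ksubsets_sum_Pow:
  fixes g :: "nat set \<Rightarrow> 'a::comm_semiring_1"
  shows "(\<Sum>S\<in>ksubsets n w. \<Sum>R\<in>Pow S. g R)
    = (\<Sum>R\<in>Pow {..<n}. if card R \<le> w then of_nat ((n - card R) choose (w - card R)) * g R else 0)"
proof -
  have "(\<Sum>S\<in>ksubsets n w. \<Sum>R\<in>Pow S. g R) = (\<Sum>S\<in>ksubsets n w. \<Sum>R\<in>Pow {..<n}. if R \<subseteq> S then g R else 0)"
  proof (rule sum.cong[OF refl])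
    fix S assume "S \<in> ksubsets n w"
    then have "Pow S = {R \<in> Pow {..<n}. R \<subseteq> S}"
      by (auto simp: ksubsets_def)
    moreover have "(\<Sum>R\<in>Pow {..<n}. if R \<subseteq> S then g R else 0) = (\<Sum>R\<in>{R \<in> Pow {..<n}. R \<subseteq> S}. g R)"
      by (rule sum.inter_filter[symmetric]) simp
    ultimately show "(\<Sum>R\<in>Pow S. g R) = (\<Sum>R\<in>Pow {..<n}. if R \<subseteq> S then g R else 0)"
      by simp
  qed
  also have "\<dots> = (\<Sum>R\<in>Pow {..<n}. of_nat (card {S \<in> ksubsets n w. R \<subseteq> S}) * g R)"
    by (subst sum.swap) (simp add: sum.inter_filter[symmetric] finite_ksubsets)
  also have "\<dots> = (\<Sum>R\<in>Pow {..<n}. if card R \<le> w then of_nat ((n - card R) choose (w - card R)) * g R else 0)"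
  proof (intro sum.cong refl)
    fix R assume R: "R \<in> Pow {..<n}"
    show "of_nat (card {S \<in> ksubsets n w. R \<subseteq> S}) * g R
        = (if card R \<le> w then of_nat ((n - card R) choose (w - card R)) * g R else 0)"
    proof (cases "card R \<le> w")
      case True
      have "{S \<in> ksubsets n w. R \<subseteq> S} = {S. S \<subseteq> {..<n} \<and> card S = w \<and> R \<subseteq> S}"
        by (auto simp: ksubsets_def)
      then show ?thesis
        using True R card_supersets[of R n w] by simp
    next
      case False
      then have none: "{S \<in> ksubsets n w. R \<subseteq> S} = {}"
        using R by (auto simp: ksubsets_def dest: card_mono[rotated] intro: finite_subset)
      show ?thesis
        unfolding none using False by simp
    qed
  qed
  finally show ?thesis .
qed

lemma pauli_weight_enum_nonneg:
  assumes q: "0 < q" and w: "w \<le> n"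
  shows "0 \<le> pauli_weight_enum (unitary_enum q n psi) (real q) n w"
proof -
  define c where "c R = (-1) ^ (w - card R) * real q ^ card R * purity q n R (density psi)" for R
  have "0 \<le> (\<Sum>S\<in>ksubsets n w. \<Sum>R\<in>Pow S. c R)"
  proof (rule sum_nonneg)
    fix S assume "S \<in> ksubsets n w"
    then have S: "S \<subseteq> {..<n}" "card S = w"
      by (auto simp: ksubsets_def)
    have "(\<Sum>R\<in>Pow S. c R) = (\<Sum>R\<in>Pow S. (-1) ^ card (S - R) * real q ^ card R * purity q n R (density psi))"
      using S by (intro sum.cong refl) (auto simp: c_def card_Diff_subset finite_subset)
    then show "0 \<le> (\<Sum>R\<in>Pow S. c R)"
      using exact_weight_nonneg[OF S(1) q] by simp
  qed
  also have "\<dots> = (\<Sum>j\<le>n. \<Sum>R\<in>ksubsets n j. if j \<le> w then of_nat ((n - j) choose (w - j)) * c R else 0)"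
    unfolding sum_ksubsets_sum_Pow sum_Pow_by_card
    by (intro sum.cong refl) (auto simp: ksubsets_def)
  also have "\<dots> = (\<Sum>j\<le>n. if j \<le> w then unitary_enum q n psi j * real q ^ j * (-1) ^ (w - j) * of_nat ((n - j) choose (w - j)) else 0)"
    unfolding unitary_enum_def sum_distrib_right
    by (intro sum.cong refl) (auto simp: c_def ksubsets_def sum_distrib_left mult_ac)
  also have "\<dots> = pauli_weight_enum (unitary_enum q n psi) (real q) n w"
    unfolding pauli_weight_enum_def using w by (intro sum.mono_neutral_cong_right) auto
  finally show ?thesis .
qed

theorem proposition1:
  fixes q n k :: nat
  assumes "q \<ge> 2"
    and "odd k" and "k > 0"
    and "k \<le> n div 2 - 2"
    and "(real (k+1) * (2 * real q - 1) - (real q - 1) * real n) \<ge> 0"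
    and "(real (k+1) * (2 * real q - 1) - (real q - 1) * real n) * alpha0 q n (k+1)
           < alpha0 q n (k+2)"
  shows "\<not> (\<exists>psi. k_uniform q n k psi)"
proof
  assume "\<exists>psi. k_uniform q n k psi"
  then obtain psi where psi: "k_uniform q n k psi" ..
  have q: "0 < q" and kn: "k + 2 \<le> n div 2"
    using assms(1,3,4) by linarith+
  show False
  proof (rule enumerators_contradiction[of q k n "unitary_enum q n psi" "shadow_enum q n psi"])
    show "\<And>j. j \<le> n \<Longrightarrow> unitary_enum q n psi j = unitary_enum q n psi (n - j)"
      using q by (rule unitary_enum_symmetric)
    show "\<And>j. j \<le> k \<Longrightarrow> unitary_enum q n psi j = real (n choose j) / real q ^ j"
      using kn by (intro unitary_enum_k_uniform[OF psi q]) auto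
    show "0 \<le> pauli_weight_enum (unitary_enum q n psi) (real q) n (k + 2)"
      using kn by (intro pauli_weight_enum_nonneg[OF q]) auto
  qed (use assms kn q in \<open>simp_all add: alpha0_eq_lagrange_coeff shadow_enum_nonneg unitary_enum_shadow_enum\<close>)
qed

end
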